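(* Assume the Hamiltonian is thermodynamically stable. Let $R\ge1$, let $G$ be an observable of $R$ replicas, and let $0<\beta_1<\beta_2$. Then, in the thermodynamic limit $|\Lambda|\to\infty$, $\int_{\beta_1}^{\beta_2}\Delta_2 G\,d\beta\to0$, where $$\Delta_2 G=\sum_{l=1}^{R}\Big(\mathrm{Av}\big(\Omega_R[h(\sigma^{(l)})]\,\Omega_R[G]\big)-\mathrm{Av}\big(\Omega_R[h(\sigma^{(l)})]\big)\,\mathrm{Av}\big(\Omega_R[G]\big)\Big),\qquad h(\sigma)=H_\Lambda(\sigma)/|\Lambda|.$$
   Context: For each finite $d$-dimensional parallelepiped $\Lambda\subset\mathbb{Z}^d$ let $\Sigma_\Lambda=\{-1,1\}^\Lambda$, and for $X\subset\Lambda$ let $\sigma_X=\prod_{i\in X}\sigma_i$ (with $\sigma_\emptyset=0$). Let $\{J_X\}$ be independent centered Gaussian random variables with variances $\mathrm{Av}(J_X^2)=\Delta_X^2$, translation invariant, where $\mathrm{Av}$ denotes expectation over the $J$'s. The Hamiltonian is $H_\Lambda(\sigma)=-\sum_{X\subset\Lambda}J_X\sigma_X$, with normalized covariance $c_\Lambda(\sigma,\tau)=\frac{1}{|\Lambda|}\sum_{X\subset\Lambda}\Delta_X^2\sigma_X\tau_X$. The Hamiltonian is thermodynamically stable if there is $\bar c<\infty$ with $\sup_{\Lambda}\frac{1}{|\Lambda|}\sum_{X\subset\Lambda}\Delta_X^2\le\bar c$. Let $\mathcal{Z}(\beta)=\sum_{\sigma}e^{-\beta H_\Lambda(\sigma)}$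 and the $R$-replica random Gibbs state $\Omega_R(f)=\sum_{\sigma^{(1)},\dots,\sigma^{(R)}}f\,e^{-\beta\sum_{i=1}^R H_\Lambda(\sigma^{(i)})}/\mathcal{Z}(\beta)^R$. An observable of $R$ replicas is a smooth function $G$ of an $R\times R$ real matrix with $|G|\le1$, evaluated at $(c_\Lambda(\sigma^{(k)},\sigma^{(l)}))_{k,l\le R}$. The thermodynamic limit is the limit along boxes $\Lambda$ with $|\Lambda|\to\infty$. *)

theory Defs
  imports "HOL-Probability.Probability"
begin

definition dirder :: "'a::real_normed_vector \<Rightarrow> ('a \<Rightarrow> real) \<Rightarrow> 'a \<Rightarrow> real" where
  "dirder v f x = (THE d. ((\<lambda>t. f (x + t *\<^sub>R v)) has_real_derivative d) (at 0))"

fun iterdir :: "'a::real_normed_vector list \<Rightarrow> ('a \<Rightarrow> real) \<Rightarrow> 'a \<Rightarrow> real" where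
  "iterdir [] f = f"
| "iterdir (v # vs) f = dirder v (iterdir vs f)"

definition smooth :: "('a::real_normed_vector \<Rightarrow> real) \<Rightarrow> bool" where
  "smooth f \<longleftrightarrow> (\<forall>vs. continuous_on UNIV (iterdir vs f) \<and>
      (\<forall>v x. (\<lambda>t. iterdir vs f (x + t *\<^sub>R v)) differentiable (at 0)))"

text \<open>Sites of Z^d are functions 'd \<Rightarrow> int with 'd a finite type, d = CARD('d).\<close>

definition is_box :: "('d::finite \<Rightarrow> int) set \<Rightarrow> bool" where
  "is_box \<Lambda> \<longleftrightarrow> (\<exists>a b. \<Lambda> = {x. \<forall>i. a i \<le> x i \<and> x i \<le> b i})"

definition translation_invariant :: "(('d \<Rightarrow> int) set \<Rightarrow> real) \<Rightarrow> bool" where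
  "translation_invariant Delta \<longleftrightarrow>
     (\<forall>X t. Delta ((\<lambda>x i. x i + t i) ` X) = Delta X)"

definition thermo_stable :: "(('d::finite \<Rightarrow> int) set \<Rightarrow> real) \<Rightarrow> bool" where
  "thermo_stable Delta \<longleftrightarrow> (\<exists>cbar. \<forall>\<Lambda>. is_box \<Lambda> \<longrightarrow>
      (1 / real (card \<Lambda>)) * (\<Sum>X\<in>Pow \<Lambda>. (Delta X)\<^sup>2) \<le> cbar)"

text \<open>Disorder: J_X = Delta X * g X with g X i.i.d. standard Gaussians, X \<subseteq> \<Lambda>.\<close>
definition Jmeasure :: "'s set \<Rightarrow> ('s set \<Rightarrow> real) measure" where
  "Jmeasure \<Lambda> = PiM (Pow \<Lambda>) (\<lambda>_. density lborel std_normal_density)"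

definition Av :: "'s set \<Rightarrow> (('s set \<Rightarrow> real) \<Rightarrow> real) \<Rightarrow> real" where
  "Av \<Lambda> F = integral\<^sup>L (Jmeasure \<Lambda>) F"

definition configs :: "'s set \<Rightarrow> ('s \<Rightarrow> real) set" where
  "configs \<Lambda> = PiE \<Lambda> (\<lambda>_. {-1, 1})"

definition spinprod :: "('s \<Rightarrow> real) \<Rightarrow> 's set \<Rightarrow> real" where
  "spinprod \<sigma> X = (if X = {} then 0 else (\<Prod>i\<in>X. \<sigma> i))"

definition Ham :: "'s set \<Rightarrow> ('s set \<Rightarrow> real) \<Rightarrow> ('s set \<Rightarrow> real) \<Rightarrow> ('s \<Rightarrow> real) \<Rightarrow> real" where
  "Ham \<Lambda> Delta g \<sigma> = - (\<Sum>X\<in>Pow \<Lambda>. Delta X * g X * spinprod \<sigma> X)"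

definition cov :: "'s set \<Rightarrow> ('s set \<Rightarrow> real) \<Rightarrow> ('s \<Rightarrow> real) \<Rightarrow> ('s \<Rightarrow> real) \<Rightarrow> real" where
  "cov \<Lambda> Delta \<sigma> \<tau> = (1 / real (card \<Lambda>)) *
      (\<Sum>X\<in>Pow \<Lambda>. (Delta X)\<^sup>2 * spinprod \<sigma> X * spinprod \<tau> X)"

definition Zpart :: "'s set \<Rightarrow> ('s set \<Rightarrow> real) \<Rightarrow> real \<Rightarrow> ('s set \<Rightarrow> real) \<Rightarrow> real" where
  "Zpart \<Lambda> Delta \<beta> g = (\<Sum>\<sigma>\<in>configs \<Lambda>. exp (- \<beta> * Ham \<Lambda> Delta g \<sigma>))"

text \<open>R-replica random Gibbs state, replicas indexed by the finite type 'r, R = CARD('r).\<close>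
definition Omega :: "'s set \<Rightarrow> ('s set \<Rightarrow> real) \<Rightarrow> real \<Rightarrow> ('s set \<Rightarrow> real)
     \<Rightarrow> (('r::finite \<Rightarrow> 's \<Rightarrow> real) \<Rightarrow> real) \<Rightarrow> real" where
  "Omega \<Lambda> Delta \<beta> g F =
     (\<Sum>s\<in>PiE (UNIV :: 'r set) (\<lambda>_. configs \<Lambda>).
        F s * exp (- \<beta> * (\<Sum>k\<in>UNIV. Ham \<Lambda> Delta g (s k))))
     / (Zpart \<Lambda> Delta \<beta> g) ^ CARD('r)"

text \<open>Observable G evaluated on the replica overlap matrix.\<close>
definition obs :: "'s set \<Rightarrow> ('s set \<Rightarrow> real) \<Rightarrow> (real^'r^'r \<Rightarrow> real)
     \<Rightarrow> ('r::finite \<Rightarrow> 's \<Rightarrow> real) \<Rightarrow> real" where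
  "obs \<Lambda> Delta G s = G (\<chi> k l. cov \<Lambda> Delta (s k) (s l))"

definition Delta2 :: "'s set \<Rightarrow> ('s set \<Rightarrow> real) \<Rightarrow> (real^'r^'r \<Rightarrow> real) \<Rightarrow> real \<Rightarrow> real" where
  "Delta2 \<Lambda> Delta G \<beta> =
     (\<Sum>l\<in>(UNIV :: 'r::finite set).
        Av \<Lambda> (\<lambda>g. Omega \<Lambda> Delta \<beta> g (\<lambda>s. Ham \<Lambda> Delta g (s l) / real (card \<Lambda>))
                 * Omega \<Lambda> Delta \<beta> g (obs \<Lambda> Delta G))
      - Av \<Lambda> (\<lambda>g. Omega \<Lambda> Delta \<beta> g (\<lambda>s. Ham \<Lambda> Delta g (s l) / real (card \<Lambda>)))
        * Av \<Lambda> (\<lambda>g. Omega \<Lambda> Delta \<beta> g (obs \<Lambda> Delta G)))"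

end

theory Submission
  imports Defs
begin

text \<open>Summing over the replica index, \<open>\<Delta>\<^sub>2G(\<beta>)\<close> becomes the disorder covariance of \<open>\<Omega>[G]\<close>
  with \<open>\<omega>(\<beta>) / |\<Lambda>|\<close>, where \<open>\<omega>(\<beta>) = \<Omega>[\<Sum>\<^sub>l H(\<sigma>\<^sup>(\<^sup>l\<^sup>))]\<close>; since \<open>|G| \<le> 1\<close>,
  \<open>|\<Delta>\<^sub>2G(\<beta>)| \<le> Av |\<omega>(\<beta>) - Av \<omega>(\<beta>)| / |\<Lambda>|\<close>. Up to sign, \<open>\<omega>\<close> is the derivative of the convex
  function \<open>\<beta> \<mapsto> ln Z\<^sup>R\<close>, so it lies between the difference quotients of \<open>ln Z\<^sup>R\<close> with step \<open>\<delta>\<close>.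
  These are Lipschitz functions of the Gaussian couplings, so by the Gaussian Poincare inequality
  they fluctuate by \<open>O(\<surd>|\<Lambda>| / \<delta>)\<close>, while the gap between their averages is at most the
  increment of the monotone function \<open>\<beta> \<mapsto> Av \<omega>(\<beta>)\<close> over \<open>[\<beta> - \<delta>, \<beta> + \<delta>]\<close>, whose integral
  over \<open>[\<beta>\<^sub>1, \<beta>\<^sub>2]\<close> is \<open>O(\<delta> |\<Lambda>|)\<close>. Hence \<open>|\<integral> \<Delta>\<^sub>2G| \<le> A / (\<delta> \<surd>|\<Lambda>|) + B \<delta>\<close>; choose \<open>\<delta>\<close>
  small, then \<open>|\<Lambda>|\<close> large.\<close>

section \<open>Gaussian concentration\<close>

lemma (in prob_space) integrable_bounded:
  fixes f :: "'a \<Rightarrow> real"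
  assumes "f \<in> borel_measurable M" and "\<And>x. \<bar>f x\<bar> \<le> T"
  shows "integrable M f" and "integrable M (\<lambda>x. (f x)\<^sup>2)"
proof -
  have "(f x)\<^sup>2 \<le> T\<^sup>2" for x
    using assms(2)[of x] by (metis abs_ge_zero power2_abs power_mono)
  then show "integrable M (\<lambda>x. (f x)\<^sup>2)"
    using assms(1) by (intro integrable_const_bound[where B="T\<^sup>2"]) auto
  show "integrable M f"
    using assms by (intro integrable_const_bound[where B=T]) auto
qed

lemma (in prob_space) variance_le_mean_square_dev:
  fixes X :: "'a \<Rightarrow> real"
  assumes "integrable M X" "integrable M (\<lambda>x. (X x)\<^sup>2)"
  shows "variance X \<le> expectation (\<lambda>x. (X x - c)\<^sup>2)"
proof -
  have "expectation (\<lambda>x. (X x - c)\<^sup>2) = variance X + (expectation X - c)\<^sup>2"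
    using assms by (simp add: variance_eq power2_diff prob_space algebra_simps power2_eq_square)
  then show ?thesis by simp
qed

lemma (in prob_space) abs_dev_le_sqrt_variance:
  fixes X :: "'a \<Rightarrow> real"
  assumes "integrable M X" and "integrable M (\<lambda>x. (X x)\<^sup>2)"
  shows "expectation (\<lambda>x. \<bar>X x - expectation X\<bar>) \<le> sqrt (variance X)"
proof -
  let ?Y = "\<lambda>x. \<bar>X x - expectation X\<bar>"
  have "integrable M ?Y" and "integrable M (\<lambda>x. (?Y x)\<^sup>2)"
    using assms by (auto simp: power2_diff)
  then have "(expectation ?Y)\<^sup>2 \<le> variance X"
    using variance_positive[of ?Y] by (simp add: variance_eq)
  then show ?thesis
    using real_sqrt_le_mono by fastforce
qed

lemma (in prob_space) abs_covariance_le_abs_dev: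
  fixes X W :: "'a \<Rightarrow> real"
  assumes "integrable M X" and "W \<in> borel_measurable M" and "\<And>x. \<bar>W x\<bar> \<le> 1"
  shows "\<bar>expectation (\<lambda>x. X x * W x) - expectation X * expectation W\<bar>
    \<le> expectation (\<lambda>x. \<bar>X x - expectation X\<bar>)"
proof -
  have W_int: "integrable M W"
    using assms(2,3) by (rule integrable_bounded)
  have bound: "\<bar>(X x - expectation X) * W x\<bar> \<le> \<bar>X x - expectation X\<bar>" for x
    using assms(3)[of x] by (simp add: abs_mult mult_left_le)
  have X_meas [measurable]: "X \<in> borel_measurable M"
    using assms(1) by (rule borel_measurable_integrable)
  have XW_int: "integrable M (\<lambda>x. (X x - expectation X) * W x)"
  proof (rule Bochner_Integration.integrable_bound)
    show "integrable M (\<lambda>x. \<bar>X x - expectation X\<bar>)"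
      using assms(1) by simp
    show "AE x in M. norm ((X x - expectation X) * W x) \<le> norm \<bar>X x - expectation X\<bar>"
      using bound by simp
  qed (use assms(2) in measurable)
  have "integrable M (\<lambda>x. (X x - expectation X) * W x + expectation X * W x)"
    using XW_int W_int by simp
  then have "integrable M (\<lambda>x. X x * W x)"
    by (simp add: algebra_simps)
  then have "expectation (\<lambda>x. X x * W x) - expectation X * expectation W
      = expectation (\<lambda>x. (X x - expectation X) * W x)"
    using W_int by (simp add: left_diff_distrib)
  also have "\<bar>\<dots>\<bar> \<le> expectation (\<lambda>x. \<bar>(X x - expectation X) * W x\<bar>)"
    by (rule integral_abs_bound)
  also have "\<dots> \<le> expectation (\<lambda>x. \<bar>X x - expectation X\<bar>)"
    using XW_int assms(1) bound by (intro integral_mono) auto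
  finally show ?thesis .
qed

lemma (in prob_space) abs_dev_le_sandwich:
  fixes X D U :: "'a \<Rightarrow> real"
  assumes "integrable M X" and "integrable M D" and "integrable M U"
    and "\<And>x. D x \<le> X x" and "\<And>x. X x \<le> U x"
  shows "expectation (\<lambda>x. \<bar>X x - expectation X\<bar>)
    \<le> expectation (\<lambda>x. \<bar>U x - expectation U\<bar>) + expectation (\<lambda>x. \<bar>D x - expectation D\<bar>)
      + (expectation U - expectation D)"
proof -
  have "expectation D \<le> expectation X" and "expectation X \<le> expectation U"
    using assms by (auto intro: integral_mono)
  then have "\<bar>X x - expectation X\<bar>
      \<le> \<bar>U x - expectation U\<bar> + \<bar>D x - expectation D\<bar> + (expectation U - expectation D)" for x
    using assms(4,5)[of x] by linarith
  then have "expectation (\<lambda>x. \<bar>X x - expectation X\<bar>)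
      \<le> expectation (\<lambda>x. \<bar>U x - expectation U\<bar> + \<bar>D x - expectation D\<bar> + (expectation U - expectation D))"
    using assms(1-3) by (intro integral_mono) auto
  also have "\<dots> = expectation (\<lambda>x. \<bar>U x - expectation U\<bar>) + expectation (\<lambda>x. \<bar>D x - expectation D\<bar>)
      + (expectation U - expectation D)"
    using assms(2,3) by (simp add: prob_space)
  finally show ?thesis .
qed

definition std_gauss :: "real measure" where
  "std_gauss = density lborel std_normal_density"

abbreviation gauss_vec :: "'i set \<Rightarrow> ('i \<Rightarrow> real) measure" where
  "gauss_vec I \<equiv> PiM I (\<lambda>_. std_gauss)"

lemma prob_space_std_gauss: "prob_space std_gauss"
  unfolding std_gauss_def by (rule prob_space_normal_density) simp

interpretation std_gauss: prob_space std_gauss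
  by (rule prob_space_std_gauss)

interpretation gauss_vec: product_prob_space "\<lambda>_. std_gauss" I for I
  by unfold_locales

lemma space_std_gauss [simp]: "space std_gauss = UNIV"
  and sets_std_gauss [simp, measurable_cong]: "sets std_gauss = sets borel"
  by (auto simp: std_gauss_def)

lemma measure_std_gauss_UNIV [simp]: "measure std_gauss UNIV = 1"
  using std_gauss.prob_space by simp

lemma integral_std_gauss:
  "f \<in> borel_measurable borel \<Longrightarrow> (\<integral>x. f x \<partial>std_gauss) = (\<integral>x. std_normal_density x * f x \<partial>lborel)"
  unfolding std_gauss_def by (subst integral_density) auto

lemma integrable_std_gauss_iff:
  "f \<in> borel_measurable borel \<Longrightarrow>
    integrable std_gauss f \<longleftrightarrow> integrable lborel (\<lambda>x. std_normal_density x * f x)"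
  unfolding std_gauss_def by (subst integrable_density) auto

lemma integrable_std_gauss_power: "integrable std_gauss (\<lambda>x. x ^ k)"
  by (subst integrable_std_gauss_iff) (auto intro: integrable_std_normal_moment)

lemma integrable_std_gauss_abs: "integrable std_gauss (\<lambda>x. \<bar>x\<bar>)"
  using integrable_std_normal_moment_abs[of 1] by (subst integrable_std_gauss_iff) auto

lemma std_gauss_mean: "(\<integral>x. x \<partial>std_gauss) = 0"
  using std_normal_moment_odd[of 0]
  by (subst integral_std_gauss) (auto dest: has_bochner_integral_integral_eq)

lemma std_gauss_second_moment: "(\<integral>x. x\<^sup>2 \<partial>std_gauss) = 1"
  using std_normal_moment_even[of 1]
  by (subst integral_std_gauss) (auto dest: has_bochner_integral_integral_eq)

lemma std_normal_density_times_exp: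
  "std_normal_density x * exp (t * x) = exp (t\<^sup>2 / 2) * normal_density t 1 x"
proof -
  have "exp (t * x) * exp (- (x * x / 2)) = exp (t * t / 2) * exp ((t * (x * 2) - (t * t + x * x)) / 2)"
    unfolding exp_add[symmetric] by (rule arg_cong[where f=exp]) (simp add: field_simps)
  then show ?thesis
    unfolding normal_density_def by (simp add: power2_eq_square field_simps)
qed

lemma integrable_std_gauss_exp: "integrable std_gauss (\<lambda>x. exp (t * x))"
  by (subst integrable_std_gauss_iff) (auto simp: std_normal_density_times_exp)

lemma std_gauss_mgf: "(\<integral>x. exp (t * x) \<partial>std_gauss) = exp (t\<^sup>2 / 2)"
  by (subst integral_std_gauss) (auto simp: std_normal_density_times_exp)

lemma borel_measurable_lipschitz:
  fixes \<phi> :: "real \<Rightarrow> real"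
  assumes "\<And>x y. \<bar>\<phi> x - \<phi> y\<bar> \<le> L * \<bar>x - y\<bar>"
  shows "\<phi> \<in> borel_measurable borel"
proof -
  have "L * \<bar>x - y\<bar> \<le> max L 0 * \<bar>x - y\<bar>" for x y
    by (intro mult_right_mono) auto
  then have "(max L 0)-lipschitz_on UNIV \<phi>"
    by (intro lipschitz_onI) (auto simp: dist_real_def intro: order_trans[OF assms])
  then show ?thesis
    by (intro borel_measurable_continuous_onI lipschitz_on_continuous_on)
qed

lemma std_gauss_variance_le_lipschitz:
  fixes \<phi> :: "real \<Rightarrow> real"
  assumes bounded: "\<And>x. \<bar>\<phi> x\<bar> \<le> T" and lipschitz: "\<And>x y. \<bar>\<phi> x - \<phi> y\<bar> \<le> L * \<bar>x - y\<bar>"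
  shows "std_gauss.variance \<phi> \<le> L\<^sup>2"
proof -
  have [measurable]: "\<phi> \<in> borel_measurable borel"
    using lipschitz by (rule borel_measurable_lipschitz)
  have "\<phi> \<in> borel_measurable std_gauss"
    by measurable
  then have int: "integrable std_gauss \<phi>" and int_square: "integrable std_gauss (\<lambda>x. (\<phi> x)\<^sup>2)"
    using bounded by (rule std_gauss.integrable_bounded)+
  have "std_gauss.variance \<phi> \<le> (\<integral>x. (\<phi> x - \<phi> 0)\<^sup>2 \<partial>std_gauss)"
    using int int_square by (rule std_gauss.variance_le_mean_square_dev)
  also have "\<dots> \<le> (\<integral>x. L\<^sup>2 * x\<^sup>2 \<partial>std_gauss)"
  proof (rule integral_mono)
    show "integrable std_gauss (\<lambda>x. (\<phi> x - \<phi> 0)\<^sup>2)"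
      using int int_square by (simp add: power2_diff)
    show "integrable std_gauss (\<lambda>x. L\<^sup>2 * x\<^sup>2)"
      using integrable_std_gauss_power[of 2] by simp
    fix x
    have "\<bar>\<phi> x - \<phi> 0\<bar>\<^sup>2 \<le> (L * \<bar>x\<bar>)\<^sup>2"
      using lipschitz[of x 0] by (intro power_mono) auto
    then show "(\<phi> x - \<phi> 0)\<^sup>2 \<le> L\<^sup>2 * x\<^sup>2" by (simp add: power_mult_distrib)
  qed
  also have "\<dots> = L\<^sup>2"
    using std_gauss_second_moment by simp
  finally show ?thesis .
qed

definition coordwise_lipschitz :: "'i set \<Rightarrow> ('i \<Rightarrow> real) \<Rightarrow> (('i \<Rightarrow> real) \<Rightarrow> real) \<Rightarrow> bool" where
  "coordwise_lipschitz I L F \<longleftrightarrow> (\<forall>x. \<forall>j\<in>I. \<forall>a b. \<bar>F (x(j := a)) - F (x(j := b))\<bar> \<le> L j * \<bar>a - b\<bar>)"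

lemma coordwise_lipschitzD:
  "coordwise_lipschitz I L F \<Longrightarrow> j \<in> I \<Longrightarrow> \<bar>F (x(j := a)) - F (x(j := b))\<bar> \<le> L j * \<bar>a - b\<bar>"
  unfolding coordwise_lipschitz_def by blast

lemma coordwise_lipschitz_comp:
  assumes "coordwise_lipschitz I L F" and "\<And>u v. \<bar>\<phi> u - \<phi> v\<bar> \<le> \<bar>u - v\<bar>"
  shows "coordwise_lipschitz I L (\<lambda>x. \<phi> (F x))"
  using assms unfolding coordwise_lipschitz_def by (blast intro: order_trans)

lemma coordwise_lipschitz_diff:
  assumes "coordwise_lipschitz I L F" and "coordwise_lipschitz I M G"
  shows "coordwise_lipschitz I (\<lambda>j. L j + M j) (\<lambda>x. F x - G x)"
  unfolding coordwise_lipschitz_def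
proof (intro allI ballI)
  fix x j a b assume "j \<in> I"
  then have "\<bar>F (x(j := a)) - F (x(j := b))\<bar> + \<bar>G (x(j := a)) - G (x(j := b))\<bar> \<le> (L j + M j) * \<bar>a - b\<bar>"
    using assms by (auto simp: distrib_right intro!: add_mono dest: coordwise_lipschitzD)
  then show "\<bar>F (x(j := a)) - G (x(j := a)) - (F (x(j := b)) - G (x(j := b)))\<bar> \<le> (L j + M j) * \<bar>a - b\<bar>"
    by linarith
qed

lemma coordwise_lipschitz_scale:
  assumes "coordwise_lipschitz I L F" and "0 \<le> c"
  shows "coordwise_lipschitz I (\<lambda>j. c * L j) (\<lambda>x. c * F x)"
  using assms unfolding coordwise_lipschitz_def
  by (auto simp: abs_mult mult.assoc simp flip: right_diff_distrib intro: mult_left_mono)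

definition fiber_mean :: "'i \<Rightarrow> (('i \<Rightarrow> real) \<Rightarrow> real) \<Rightarrow> ('i \<Rightarrow> real) \<Rightarrow> real" where
  "fiber_mean i F x = (\<integral>y. F (x(i := y)) \<partial>std_gauss)"

lemma borel_measurable_fiber_mean:
  fixes F :: "('i \<Rightarrow> real) \<Rightarrow> real"
  assumes "F \<in> borel_measurable (gauss_vec (insert i I))"
  shows "fiber_mean i F \<in> borel_measurable (gauss_vec I)"
proof -
  have "F \<circ> (\<lambda>(x, y). x(i := y)) \<in> borel_measurable (gauss_vec I \<Otimes>\<^sub>M std_gauss)"
    using measurable_add_dim assms by (rule measurable_comp)
  then have "(\<lambda>(x, y). F (x(i := y))) \<in> borel_measurable (gauss_vec I \<Otimes>\<^sub>M std_gauss)"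
    by (simp add: comp_def case_prod_unfold)
  then show ?thesis
    unfolding fiber_mean_def by (rule std_gauss.borel_measurable_lebesgue_integral)
qed

lemma integrable_fiber:
  assumes "coordwise_lipschitz J L F" and "i \<in> J" and "\<And>x. \<bar>F x\<bar> \<le> T"
  shows "integrable std_gauss (\<lambda>y. F (x(i := y)))" and "integrable std_gauss (\<lambda>y. (F (x(i := y)))\<^sup>2)"
proof -
  have [measurable]: "(\<lambda>y. F (x(i := y))) \<in> borel_measurable borel"
    by (rule borel_measurable_lipschitz coordwise_lipschitzD[OF assms(1,2)])+
  have "(\<lambda>y. F (x(i := y))) \<in> borel_measurable std_gauss"
    by measurable
  then show "integrable std_gauss (\<lambda>y. F (x(i := y)))" and "integrable std_gauss (\<lambda>y. (F (x(i := y)))\<^sup>2)"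
    using assms(3) by (rule std_gauss.integrable_bounded)+
qed

lemma abs_fiber_mean_le:
  assumes "coordwise_lipschitz J L F" and "i \<in> J" and "\<And>x. \<bar>F x\<bar> \<le> T"
  shows "\<bar>fiber_mean i F x\<bar> \<le> T"
proof -
  have "\<bar>fiber_mean i F x\<bar> \<le> (\<integral>y. \<bar>F (x(i := y))\<bar> \<partial>std_gauss)"
    unfolding fiber_mean_def by (rule integral_abs_bound)
  also have "\<dots> \<le> (\<integral>y. T \<partial>std_gauss)"
    using integrable_fiber[OF assms] assms(3) by (intro integral_mono) auto
  finally show ?thesis by simp
qed

lemma coordwise_lipschitz_fiber_mean:
  fixes F :: "('i \<Rightarrow> real) \<Rightarrow> real"
  assumes "coordwise_lipschitz (insert i I) L F" and "i \<notin> I" and "\<And>x. \<bar>F x\<bar> \<le> T"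
  shows "coordwise_lipschitz I L (fiber_mean i F)"
  unfolding coordwise_lipschitz_def
proof (intro allI ballI)
  fix x :: "'i \<Rightarrow> real" and j :: 'i and a b :: real
  assume j: "j \<in> I"
  with assms(2) have "x(j := c, i := y) = x(i := y, j := c)" for c y
    by (auto simp: fun_upd_twist)
  then have "\<bar>F (x(j := a, i := y)) - F (x(j := b, i := y))\<bar> \<le> L j * \<bar>a - b\<bar>" for y
    using j assms(1) by (auto intro: coordwise_lipschitzD)
  moreover have "integrable std_gauss (\<lambda>y. F (z(i := y)))" for z
    by (rule integrable_fiber(1)[OF assms(1) insertI1 assms(3)])
  ultimately have "(\<integral>y. \<bar>F (x(j := a, i := y)) - F (x(j := b, i := y))\<bar> \<partial>std_gauss)
      \<le> (\<integral>y. L j * \<bar>a - b\<bar> \<partial>std_gauss)"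
    by (intro integral_mono) auto
  moreover have "\<bar>fiber_mean i F (x(j := a)) - fiber_mean i F (x(j := b))\<bar>
      \<le> (\<integral>y. \<bar>F (x(j := a, i := y)) - F (x(j := b, i := y))\<bar> \<partial>std_gauss)"
    unfolding fiber_mean_def using \<open>\<And>z. integrable std_gauss (\<lambda>y. F (z(i := y)))\<close>
    by (simp flip: Bochner_Integration.integral_diff)
  ultimately show "\<bar>fiber_mean i F (x(j := a)) - fiber_mean i F (x(j := b))\<bar> \<le> L j * \<bar>a - b\<bar>"
    by simp
qed

lemma fiber_second_moment_le:
  assumes "coordwise_lipschitz J L F" and "i \<in> J" and "\<And>x. \<bar>F x\<bar> \<le> T"
  shows "(\<integral>y. (F (x(i := y)))\<^sup>2 \<partial>std_gauss) \<le> (fiber_mean i F x)\<^sup>2 + (L i)\<^sup>2"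
proof -
  have "std_gauss.variance (\<lambda>y. F (x(i := y))) \<le> (L i)\<^sup>2"
    by (rule std_gauss_variance_le_lipschitz assms(3) coordwise_lipschitzD[OF assms(1,2)])+
  then show ?thesis
    using integrable_fiber[OF assms] by (simp add: std_gauss.variance_eq fiber_mean_def)
qed

text \<open>Efron--Stein: integrating out the coordinate \<open>i\<close>, the variance splits into the variance
  of the fibre mean plus the mean of the variances along the fibres.\<close>

lemma gauss_vec_variance_insert_le:
  fixes F :: "('i \<Rightarrow> real) \<Rightarrow> real"
  assumes "finite I" and "i \<notin> I" and F_meas: "F \<in> borel_measurable (gauss_vec (insert i I))"
    and bounded: "\<And>x. \<bar>F x\<bar> \<le> T" and lipschitz: "coordwise_lipschitz (insert i I) L F"
  shows "gauss_vec.variance (insert i I) F \<le> gauss_vec.variance I (fiber_mean i F) + (L i)\<^sup>2"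
proof -
  let ?G = "fiber_mean i F" and ?H = "\<lambda>x. \<integral>y. (F (x(i := y)))\<^sup>2 \<partial>std_gauss"
  have F_int: "integrable (gauss_vec (insert i I)) F"
    and F_square_int: "integrable (gauss_vec (insert i I)) (\<lambda>x. (F x)\<^sup>2)"
    using F_meas bounded by (rule gauss_vec.integrable_bounded)+
  have G_meas: "?G \<in> borel_measurable (gauss_vec I)"
    using F_meas by (rule borel_measurable_fiber_mean)
  have G_int: "integrable (gauss_vec I) ?G" and G_square_int: "integrable (gauss_vec I) (\<lambda>x. (?G x)\<^sup>2)"
    using G_meas abs_fiber_mean_le[OF lipschitz insertI1 bounded] by (rule gauss_vec.integrable_bounded)+
  have H_le: "?H x \<le> (?G x)\<^sup>2 + (L i)\<^sup>2" for x
    using lipschitz insertI1 bounded by (rule fiber_second_moment_le)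
  have GL_int: "integrable (gauss_vec I) (\<lambda>x. (?G x)\<^sup>2 + (L i)\<^sup>2)"
    using G_square_int by simp
  have H_int: "integrable (gauss_vec I) ?H"
  proof (rule Bochner_Integration.integrable_bound[OF GL_int])
    show "?H \<in> borel_measurable (gauss_vec I)"
      using borel_measurable_fiber_mean[of "\<lambda>x. (F x)\<^sup>2"] F_meas by (simp add: fiber_mean_def)
    have "0 \<le> ?H x" for x
      by (rule integral_nonneg_AE) auto
    then show "AE x in gauss_vec I. norm (?H x) \<le> norm ((?G x)\<^sup>2 + (L i)\<^sup>2)"
      using H_le by (intro AE_I2) simp
  qed
  have "gauss_vec.variance (insert i I) F
      = (\<integral>x. (F x)\<^sup>2 \<partial>gauss_vec (insert i I)) - (\<integral>x. F x \<partial>gauss_vec (insert i I))\<^sup>2"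
    using F_int F_square_int by (rule gauss_vec.variance_eq)
  also have "\<dots> = (\<integral>x. ?H x \<partial>gauss_vec I) - (\<integral>x. ?G x \<partial>gauss_vec I)\<^sup>2"
    unfolding fiber_mean_def gauss_vec.product_integral_insert[OF assms(1,2) F_int]
      gauss_vec.product_integral_insert[OF assms(1,2) F_square_int] ..
  also have "\<dots> \<le> (\<integral>x. (?G x)\<^sup>2 + (L i)\<^sup>2 \<partial>gauss_vec I) - (\<integral>x. ?G x \<partial>gauss_vec I)\<^sup>2"
    using integral_mono[OF H_int GL_int H_le] by simp
  also have "\<dots> = gauss_vec.variance I ?G + (L i)\<^sup>2"
    using G_int G_square_int by (simp add: gauss_vec.variance_eq gauss_vec.P.prob_space)
  finally show ?thesis .
qed

lemma gauss_vec_variance_le: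
  fixes F :: "('i \<Rightarrow> real) \<Rightarrow> real"
  assumes "finite I" and "F \<in> borel_measurable (gauss_vec I)" and "\<And>x. \<bar>F x\<bar> \<le> T"
    and "coordwise_lipschitz I L F"
  shows "gauss_vec.variance I F \<le> (\<Sum>j\<in>I. (L j)\<^sup>2)"
  using assms
proof (induction I arbitrary: F rule: finite_induct)
  case empty
  then show ?case by (simp add: PiM_empty lebesgue_integral_count_space_finite)
next
  case (insert i I)
  have "gauss_vec.variance I (fiber_mean i F) \<le> (\<Sum>j\<in>I. (L j)\<^sup>2)"
    using insert.prems insert.hyps
    by (intro insert.IH borel_measurable_fiber_mean abs_fiber_mean_le coordwise_lipschitz_fiber_mean) auto
  then show ?case
    using gauss_vec_variance_insert_le[OF insert.hyps insert.prems] insert.hyps by simp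
qed

lemma gauss_vec_abs_dev_le_bounded:
  fixes F :: "('i \<Rightarrow> real) \<Rightarrow> real"
  assumes "finite I" and "F \<in> borel_measurable (gauss_vec I)" and "\<And>x. \<bar>F x\<bar> \<le> T"
    and "coordwise_lipschitz I L F"
  shows "(\<integral>x. \<bar>F x - (\<integral>y. F y \<partial>gauss_vec I)\<bar> \<partial>gauss_vec I) \<le> sqrt (\<Sum>j\<in>I. (L j)\<^sup>2)"
proof -
  have "(\<integral>x. \<bar>F x - (\<integral>y. F y \<partial>gauss_vec I)\<bar> \<partial>gauss_vec I) \<le> sqrt (gauss_vec.variance I F)"
    using assms(2,3) by (intro gauss_vec.abs_dev_le_sqrt_variance gauss_vec.integrable_bounded)
  also have "\<dots> \<le> sqrt (\<Sum>j\<in>I. (L j)\<^sup>2)"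
    using gauss_vec_variance_le[OF assms] by (rule real_sqrt_le_mono)
  finally show ?thesis .
qed

lemma tendsto_integral_truncation_error:
  fixes F :: "'a \<Rightarrow> real"
  assumes "integrable M F"
  shows "(\<lambda>n. \<integral>x. \<bar>F x - max (- real n) (min (real n) (F x))\<bar> \<partial>M) \<longlonglongrightarrow> 0"
proof -
  have [measurable]: "F \<in> borel_measurable M"
    using assms by (rule borel_measurable_integrable)
  have "(\<lambda>n. \<integral>x. \<bar>F x - max (- real n) (min (real n) (F x))\<bar> \<partial>M) \<longlonglongrightarrow> (\<integral>x. 0 \<partial>M)"
  proof (rule integral_dominated_convergence[where w="\<lambda>x. \<bar>F x\<bar>"])
    show "integrable M (\<lambda>x. \<bar>F x\<bar>)"
      using assms by simp
    show "AE x in M. (\<lambda>n. \<bar>F x - max (- real n) (min (real n) (F x))\<bar>) \<longlonglongrightarrow> 0"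
    proof (intro AE_I2 tendsto_eventually)
      fix x
      obtain N :: nat where "\<bar>F x\<bar> \<le> real N"
        using real_arch_simple by blast
      then show "\<forall>\<^sub>F n in sequentially. \<bar>F x - max (- real n) (min (real n) (F x))\<bar> = 0"
        unfolding eventually_sequentially by (intro exI[of _ N]) (auto simp: max_def min_def)
    qed
  qed auto
  then show ?thesis by simp
qed

text \<open>Truncating \<open>F\<close> at level \<open>n\<close> preserves the coordinatewise Lipschitz bounds, and the
  truncations converge to \<open>F\<close> in \<open>L\<^sup>1\<close>.\<close>

lemma gauss_vec_abs_dev_le:
  fixes F :: "('i \<Rightarrow> real) \<Rightarrow> real"
  assumes "finite I" and F_int: "integrable (gauss_vec I) F" and "coordwise_lipschitz I L F"
  shows "(\<integral>x. \<bar>F x - (\<integral>y. F y \<partial>gauss_vec I)\<bar> \<partial>gauss_vec I) \<le> sqrt (\<Sum>j\<in>I. (L j)\<^sup>2)"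
proof -
  let ?E = "\<lambda>f. \<integral>x. f x \<partial>gauss_vec I"
  define F' where "F' n x = max (- real n) (min (real n) (F x))" for n x
  have [measurable]: "F \<in> borel_measurable (gauss_vec I)"
    using F_int by (rule borel_measurable_integrable)
  have F'_meas [measurable]: "F' n \<in> borel_measurable (gauss_vec I)" for n
    unfolding F'_def by measurable
  have F'_bounded: "\<bar>F' n x\<bar> \<le> real n" for n x
    unfolding F'_def by auto
  have F'_int: "integrable (gauss_vec I) (F' n)" for n
    using F'_meas F'_bounded by (rule gauss_vec.integrable_bounded)
  have triangle: "?E (\<lambda>x. \<bar>F x - ?E F\<bar>) - sqrt (\<Sum>j\<in>I. (L j)\<^sup>2) \<le> 2 * ?E (\<lambda>x. \<bar>F x - F' n x\<bar>)"
    for n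
  proof -
    have "?E (\<lambda>x. \<bar>F' n x - ?E (F' n)\<bar>) \<le> sqrt (\<Sum>j\<in>I. (L j)\<^sup>2)"
      using assms(1) F'_meas F'_bounded
      by (rule gauss_vec_abs_dev_le_bounded) (unfold F'_def, rule coordwise_lipschitz_comp[OF assms(3)], auto)
    moreover have "\<bar>?E (F' n) - ?E F\<bar> \<le> ?E (\<lambda>x. \<bar>F' n x - F x\<bar>)"
      using F_int F'_int integral_abs_bound[of "gauss_vec I" "\<lambda>x. F' n x - F x"] by simp
    moreover have "?E (\<lambda>x. \<bar>F x - ?E F\<bar>)
        \<le> ?E (\<lambda>x. \<bar>F x - F' n x\<bar> + \<bar>F' n x - ?E (F' n)\<bar> + \<bar>?E (F' n) - ?E F\<bar>)"
      using F_int F'_int by (intro integral_mono) auto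
    moreover have "\<dots> = ?E (\<lambda>x. \<bar>F x - F' n x\<bar>) + ?E (\<lambda>x. \<bar>F' n x - ?E (F' n)\<bar>) + \<bar>?E (F' n) - ?E F\<bar>"
      using F_int F'_int by (simp add: gauss_vec.P.prob_space)
    ultimately show ?thesis
      by (simp add: abs_minus_commute)
  qed
  have "(\<lambda>n. 2 * ?E (\<lambda>x. \<bar>F x - F' n x\<bar>)) \<longlonglongrightarrow> 0"
    using tendsto_mult_right_zero[OF tendsto_integral_truncation_error[OF F_int], of 2]
    unfolding F'_def by simp
  then have "?E (\<lambda>x. \<bar>F x - ?E F\<bar>) - sqrt (\<Sum>j\<in>I. (L j)\<^sup>2) \<le> 0"
    by (rule LIMSEQ_le_const) (use triangle in auto)
  then show ?thesis by simp
qed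

lemma gauss_vec_integral_component:
  fixes h :: "real \<Rightarrow> real"
  assumes "finite I" and "i \<in> I" and "integrable std_gauss h"
  shows "integrable (gauss_vec I) (\<lambda>x. h (x i))"
    and "(\<integral>x. h (x i) \<partial>gauss_vec I) = (\<integral>y. h y \<partial>std_gauss)"
proof -
  define f where "f j y = (if j = i then h y else 1)" for j y
  have f_int: "integrable std_gauss (f j)" for j
    unfolding f_def using assms(3) by (cases "j = i") auto
  have prod_eq: "(\<Prod>j\<in>I. f j (x j)) = h (x i)" for x
    unfolding f_def using assms(1,2) by simp
  have "integrable (gauss_vec I) (\<lambda>x. \<Prod>j\<in>I. f j (x j))"
    using assms(1) f_int by (rule gauss_vec.product_integrable_prod)
  then show "integrable (gauss_vec I) (\<lambda>x. h (x i))"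
    unfolding prod_eq .
  have "(\<integral>x. (\<Prod>j\<in>I. f j (x j)) \<partial>gauss_vec I) = (\<Prod>j\<in>I. \<integral>y. f j y \<partial>std_gauss)"
    using assms(1) f_int by (rule gauss_vec.product_integral_prod)
  also have "\<dots> = (\<Prod>j\<in>I. if j = i then (\<integral>y. h y \<partial>std_gauss) else 1)"
    by (rule prod.cong) (auto simp: f_def)
  also have "\<dots> = (\<integral>y. h y \<partial>std_gauss)"
    using assms(1,2) by simp
  finally show "(\<integral>x. h (x i) \<partial>gauss_vec I) = (\<integral>y. h y \<partial>std_gauss)"
    unfolding prod_eq .
qed

section \<open>Gaussian energy models\<close>

lemma ln_sum_exp_le_shift:
  fixes u v :: "'s \<Rightarrow> real"
  assumes "finite S" and "S \<noteq> {}" and "\<And>s. s \<in> S \<Longrightarrow> u s \<le> v s + c"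
  shows "ln (\<Sum>s\<in>S. exp (u s)) \<le> ln (\<Sum>s\<in>S. exp (v s)) + c"
proof -
  have pos: "0 < (\<Sum>s\<in>S. exp (w s))" for w :: "'s \<Rightarrow> real"
    using assms(1,2) by (intro sum_pos) auto
  have "(\<Sum>s\<in>S. exp (u s)) \<le> (\<Sum>s\<in>S. exp (v s) * exp c)"
    using assms(3) by (intro sum_mono) (simp flip: exp_add)
  then have "ln (\<Sum>s\<in>S. exp (u s)) \<le> ln ((\<Sum>s\<in>S. exp (v s)) * exp c)"
    using pos[of u] pos[of v] by (simp add: sum_distrib_right)
  then show ?thesis
    using pos[of v] by (simp add: ln_mult)
qed

lemma supporting_slope_mono:
  fixes f m :: "real \<Rightarrow> real"
  assumes tangent: "\<And>x y. f x + (y - x) * m x \<le> f y" and "x \<le> y"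
  shows "m x \<le> m y"
proof (cases "x = y")
  case False
  have "(y - x) * m x \<le> (y - x) * m y"
    using tangent[of x y] tangent[of y x] by (simp add: algebra_simps)
  then show ?thesis
    using assms(2) False by simp
qed simp

lemma supporting_slope_between_quotients:
  fixes f m :: "real \<Rightarrow> real"
  assumes tangent: "\<And>x y. f x + (y - x) * m x \<le> f y" and "0 < \<delta>"
  shows "(f x - f (x - \<delta>)) / \<delta> \<le> m x" and "m x \<le> (f (x + \<delta>) - f x) / \<delta>"
  using tangent[of x "x - \<delta>"] tangent[of x "x + \<delta>"] assms(2)
  by (simp_all add: divide_le_eq le_divide_eq mult.commute)

locale gaussian_energy_model =
  fixes S :: "'s set" and P :: "'i set" and a :: "'s \<Rightarrow> 'i \<Rightarrow> real" and A :: "'i \<Rightarrow> real"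
  assumes finite_states: "finite S" and states_nonempty: "S \<noteq> {}" and finite_disorder: "finite P"
    and coeff_bound: "\<And>s X. s \<in> S \<Longrightarrow> X \<in> P \<Longrightarrow> \<bar>a s X\<bar> \<le> A X"
begin

definition energy :: "'s \<Rightarrow> ('i \<Rightarrow> real) \<Rightarrow> real" where
  "energy s g = (\<Sum>X\<in>P. a s X * g X)"

definition part_fun :: "real \<Rightarrow> ('i \<Rightarrow> real) \<Rightarrow> real" where
  "part_fun \<beta> g = (\<Sum>s\<in>S. exp (\<beta> * energy s g))"

definition log_part :: "real \<Rightarrow> ('i \<Rightarrow> real) \<Rightarrow> real" where
  "log_part \<beta> g = ln (part_fun \<beta> g)"

definition gibbs :: "real \<Rightarrow> ('i \<Rightarrow> real) \<Rightarrow> ('s \<Rightarrow> real) \<Rightarrow> real" where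
  "gibbs \<beta> g f = (\<Sum>s\<in>S. f s * exp (\<beta> * energy s g)) / part_fun \<beta> g"

definition mean_energy :: "real \<Rightarrow> ('i \<Rightarrow> real) \<Rightarrow> real" where
  "mean_energy \<beta> g = gibbs \<beta> g (\<lambda>s. energy s g)"

definition energy_bound :: "('i \<Rightarrow> real) \<Rightarrow> real" where
  "energy_bound g = (\<Sum>X\<in>P. A X * \<bar>g X\<bar>)"

definition var_bound :: real where
  "var_bound = (\<Sum>X\<in>P. (A X)\<^sup>2)"

lemma part_fun_pos: "0 < part_fun \<beta> g"
  unfolding part_fun_def using finite_states states_nonempty by (intro sum_pos) auto

lemma coeff_bound_nonneg: "X \<in> P \<Longrightarrow> 0 \<le> A X"
  using coeff_bound states_nonempty by (meson abs_ge_zero equals0I order_trans)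

lemma energy_bound_nonneg: "0 \<le> energy_bound g"
  unfolding energy_bound_def using coeff_bound_nonneg by (intro sum_nonneg) auto

lemma var_bound_nonneg: "0 \<le> var_bound"
  unfolding var_bound_def by (intro sum_nonneg) auto

lemma abs_energy_le: "s \<in> S \<Longrightarrow> \<bar>energy s g\<bar> \<le> energy_bound g"
  unfolding energy_def energy_bound_def
  by (rule order_trans[OF sum_abs], rule sum_mono)
     (auto simp: abs_mult intro: mult_right_mono coeff_bound)

lemma energy_fun_upd: "X \<in> P \<Longrightarrow> energy s (g(X := u)) - energy s (g(X := v)) = a s X * (u - v)"
proof -
  assume "X \<in> P"
  have "energy s (g(X := u)) - energy s (g(X := v)) = (\<Sum>Y\<in>P. a s Y * ((g(X := u)) Y - (g(X := v)) Y))"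
    unfolding energy_def by (simp add: sum_subtractf right_diff_distrib)
  also have "\<dots> = (\<Sum>Y\<in>P. if Y = X then a s X * (u - v) else 0)"
    by (rule sum.cong) auto
  also have "\<dots> = a s X * (u - v)"
    using finite_disorder \<open>X \<in> P\<close> by simp
  finally show ?thesis .
qed

lemma gibbs_abs_le:
  assumes "\<And>s. s \<in> S \<Longrightarrow> \<bar>f s\<bar> \<le> B"
  shows "\<bar>gibbs \<beta> g f\<bar> \<le> B"
proof -
  have "\<bar>\<Sum>s\<in>S. f s * exp (\<beta> * energy s g)\<bar> \<le> (\<Sum>s\<in>S. B * exp (\<beta> * energy s g))"
    using assms by (intro order_trans[OF sum_abs] sum_mono) (auto simp: abs_mult intro: mult_right_mono)
  also have "\<dots> = B * part_fun \<beta> g"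
    unfolding part_fun_def by (simp add: sum_distrib_left)
  finally show ?thesis
    unfolding gibbs_def using part_fun_pos[of \<beta> g]
    by (simp add: abs_divide abs_of_pos pos_divide_le_eq)
qed

lemma gibbs_sum: "(\<Sum>l\<in>L. gibbs \<beta> g (f l)) = gibbs \<beta> g (\<lambda>s. \<Sum>l\<in>L. f l s)"
  unfolding gibbs_def by (simp add: sum_divide_distrib[symmetric] sum_distrib_right sum.swap[of _ L])

lemma abs_mean_energy_le: "\<bar>mean_energy \<beta> g\<bar> \<le> energy_bound g"
  unfolding mean_energy_def by (rule gibbs_abs_le) (rule abs_energy_le)

lemma log_part_zero: "log_part 0 g = ln (card S)"
  unfolding log_part_def part_fun_def by simp

lemma log_part_ge: "s \<in> S \<Longrightarrow> \<beta> * energy s g \<le> log_part \<beta> g"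
  unfolding log_part_def
  using part_fun_pos member_le_sum[of s S "\<lambda>s. exp (\<beta> * energy s g)"] finite_states
  by (subst ln_ge_iff) (auto simp: part_fun_def)

lemma abs_log_part_le: "\<bar>log_part \<beta> g\<bar> \<le> ln (card S) + \<bar>\<beta>\<bar> * energy_bound g"
proof -
  have energy_bounds: "\<bar>\<beta> * energy s g\<bar> \<le> \<bar>\<beta>\<bar> * energy_bound g" if "s \<in> S" for s
    using abs_energy_le[OF that] by (simp add: abs_mult mult_left_mono)
  obtain s0 where "s0 \<in> S"
    using states_nonempty by blast
  then have lower: "- (\<bar>\<beta>\<bar> * energy_bound g) \<le> log_part \<beta> g"
    using log_part_ge[of s0 \<beta> g] energy_bounds[of s0] by linarith
  have "log_part \<beta> g \<le> ln (\<Sum>s\<in>S. exp 0) + \<bar>\<beta>\<bar> * energy_bound g"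
    unfolding log_part_def part_fun_def using finite_states states_nonempty energy_bounds
    by (intro ln_sum_exp_le_shift) (auto simp: abs_le_iff)
  moreover have "0 \<le> ln (real (card S))"
    using finite_states states_nonempty by (simp add: Suc_le_eq card_gt_0_iff)
  ultimately show ?thesis
    using lower by (simp add: abs_le_iff)
qed

lemma log_part_lipschitz: "coordwise_lipschitz P (\<lambda>X. \<bar>\<beta>\<bar> * A X) (log_part \<beta>)"
  unfolding coordwise_lipschitz_def
proof (intro allI ballI)
  fix g X u v assume X: "X \<in> P"
  have shift: "\<bar>\<beta> * energy s (g(X := u)) - \<beta> * energy s (g(X := v))\<bar> \<le> \<bar>\<beta>\<bar> * A X * \<bar>u - v\<bar>"
    if "s \<in> S" for s
  proof -
    have "\<bar>a s X\<bar> * \<bar>u - v\<bar> \<le> A X * \<bar>u - v\<bar>"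
      using coeff_bound[OF that X] by (rule mult_right_mono) simp
    then show ?thesis
      using energy_fun_upd[OF X, of s g u v]
      by (simp add: abs_mult mult.assoc mult_left_mono flip: right_diff_distrib)
  qed
  show "\<bar>log_part \<beta> (g(X := u)) - log_part \<beta> (g(X := v))\<bar> \<le> \<bar>\<beta>\<bar> * A X * \<bar>u - v\<bar>"
    unfolding log_part_def part_fun_def abs_le_iff
    using ln_sum_exp_le_shift[OF finite_states states_nonempty, of "\<lambda>s. \<beta> * energy s (g(X := u))"
        "\<lambda>s. \<beta> * energy s (g(X := v))" "\<bar>\<beta>\<bar> * A X * \<bar>u - v\<bar>"]
      ln_sum_exp_le_shift[OF finite_states states_nonempty, of "\<lambda>s. \<beta> * energy s (g(X := v))"
        "\<lambda>s. \<beta> * energy s (g(X := u))" "\<bar>\<beta>\<bar> * A X * \<bar>u - v\<bar>"]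
      shift by (fastforce simp: abs_le_iff)
qed

text \<open>Convexity of \<open>log_part\<close> in \<open>\<beta>\<close> without derivatives: with \<open>m = mean_energy x g\<close>,
  \<open>exp (t * e) \<ge> exp (t * m) * (1 + t * (e - m))\<close>, and the linear term has Gibbs mean zero.\<close>

lemma log_part_tangent: "log_part x g + (y - x) * mean_energy x g \<le> log_part y g"
proof -
  define t where "t = y - x"
  define m where "m = mean_energy x g"
  define w where "w s = exp (x * energy s g)" for s
  have Z: "part_fun x g = (\<Sum>s\<in>S. w s)"
    unfolding part_fun_def w_def ..
  have m: "(\<Sum>s\<in>S. energy s g * w s) = m * part_fun x g"
    unfolding m_def mean_energy_def gibbs_def w_def using part_fun_pos[of x g] by simp
  have "(\<Sum>s\<in>S. w s * (1 + t * (energy s g - m)))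
      = (\<Sum>s\<in>S. w s) + t * (\<Sum>s\<in>S. energy s g * w s) - t * m * (\<Sum>s\<in>S. w s)"
    by (simp add: sum.distrib sum_subtractf sum_distrib_left algebra_simps)
  then have "exp (t * m) * part_fun x g = exp (t * m) * (\<Sum>s\<in>S. w s * (1 + t * (energy s g - m)))"
    using m by (simp add: Z)
  also have "\<dots> \<le> (\<Sum>s\<in>S. w s * exp (t * energy s g))"
  proof -
    have "exp (t * m) * (1 + t * (energy s g - m)) \<le> exp (t * m) * exp (t * (energy s g - m))" for s
      by (intro mult_left_mono exp_ge_add_one_self) auto
    also have "exp (t * m) * exp (t * (energy s g - m)) = exp (t * energy s g)" for s
      by (simp add: algebra_simps flip: exp_add)
    finally have "exp (t * m) * (1 + t * (energy s g - m)) \<le> exp (t * energy s g)" for s .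
    then show ?thesis
      by (simp add: sum_distrib_left w_def mult.left_commute mult_left_mono sum_mono)
  qed
  also have "\<dots> = part_fun y g"
    unfolding part_fun_def w_def t_def by (simp add: algebra_simps flip: exp_add)
  finally have "exp (t * m) * part_fun x g \<le> part_fun y g" .
  then have "ln (exp (t * m) * part_fun x g) \<le> log_part y g"
    unfolding log_part_def using part_fun_pos by simp
  then show ?thesis
    unfolding log_part_def t_def m_def using part_fun_pos[of x g] by (simp add: ln_mult)
qed

lemma borel_measurable_energy [measurable]: "energy s \<in> borel_measurable (gauss_vec P)"
  unfolding energy_def by measurable

lemma borel_measurable_log_part [measurable]: "log_part \<beta> \<in> borel_measurable (gauss_vec P)"
  unfolding log_part_def part_fun_def by measurable

lemma borel_measurable_mean_energy [measurable]: "mean_energy \<beta> \<in> borel_measurable (gauss_vec P)"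
  unfolding mean_energy_def gibbs_def part_fun_def by measurable

lemma integrable_energy_bound: "integrable (gauss_vec P) energy_bound"
  unfolding energy_bound_def
  using gauss_vec_integral_component(1)[OF finite_disorder _ integrable_std_gauss_abs] by auto

lemma integrable_energy_dominated:
  assumes "f \<in> borel_measurable (gauss_vec P)" and "\<And>g. \<bar>f g\<bar> \<le> c + d * energy_bound g"
  shows "integrable (gauss_vec P) f"
proof (rule Bochner_Integration.integrable_bound)
  show "integrable (gauss_vec P) (\<lambda>g. \<bar>c\<bar> + \<bar>d\<bar> * energy_bound g)"
    using integrable_energy_bound by simp
  have "d * energy_bound g \<le> \<bar>d\<bar> * energy_bound g" for g
    using energy_bound_nonneg by (intro mult_right_mono) auto
  then show "AE g in gauss_vec P. norm (f g) \<le> norm (\<bar>c\<bar> + \<bar>d\<bar> * energy_bound g)"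
    using assms(2) energy_bound_nonneg by (intro AE_I2) (smt (verit) real_norm_def)
qed fact

lemma integrable_energy: "integrable (gauss_vec P) (energy s)"
  and integral_energy: "(\<integral>g. energy s g \<partial>gauss_vec P) = 0"
proof -
  have comp: "integrable (gauss_vec P) (\<lambda>g. g X)" "(\<integral>g. g X \<partial>gauss_vec P) = 0" if "X \<in> P" for X
    using gauss_vec_integral_component[OF finite_disorder that integrable_std_gauss_power[of 1]]
      std_gauss_mean by simp_all
  then show "integrable (gauss_vec P) (energy s)"
    unfolding energy_def by auto
  then show "(\<integral>g. energy s g \<partial>gauss_vec P) = 0"
    unfolding energy_def using comp by (subst Bochner_Integration.integral_sum) auto
qed

lemma integrable_log_part: "integrable (gauss_vec P) (log_part \<beta>)"
  using abs_log_part_le by (intro integrable_energy_dominated) auto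

lemma integrable_mean_energy: "integrable (gauss_vec P) (mean_energy \<beta>)"
  using abs_mean_energy_le by (intro integrable_energy_dominated[where c=0 and d=1]) auto

lemma integral_exp_energy_le:
  assumes "s \<in> S"
  shows "integrable (gauss_vec P) (\<lambda>g. exp (\<beta> * energy s g))"
    and "(\<integral>g. exp (\<beta> * energy s g) \<partial>gauss_vec P) \<le> exp (\<beta>\<^sup>2 * var_bound / 2)"
proof -
  have prod_eq: "exp (\<beta> * energy s g) = (\<Prod>X\<in>P. exp (\<beta> * a s X * g X))" for g
    unfolding energy_def using finite_disorder by (simp add: sum_distrib_left exp_sum mult.assoc)
  show "integrable (gauss_vec P) (\<lambda>g. exp (\<beta> * energy s g))"
    unfolding prod_eq
    by (rule gauss_vec.product_integrable_prod[OF finite_disorder integrable_std_gauss_exp])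
  have "(\<integral>g. exp (\<beta> * energy s g) \<partial>gauss_vec P) = (\<Prod>X\<in>P. exp ((\<beta> * a s X)\<^sup>2 / 2))"
    unfolding prod_eq
    by (simp add: gauss_vec.product_integral_prod[OF finite_disorder integrable_std_gauss_exp]
        std_gauss_mgf)
  also have "\<dots> = exp (\<Sum>X\<in>P. \<beta>\<^sup>2 * (a s X)\<^sup>2 / 2)"
    using finite_disorder by (simp add: exp_sum power_mult_distrib)
  also have "\<dots> \<le> exp (\<Sum>X\<in>P. \<beta>\<^sup>2 * (A X)\<^sup>2 / 2)"
  proof -
    have "(a s X)\<^sup>2 \<le> (A X)\<^sup>2" if "X \<in> P" for X
      using coeff_bound[OF assms that] by (metis abs_ge_zero power2_abs power_mono)
    then show ?thesis
      by (auto intro!: sum_mono mult_left_mono divide_right_mono)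
  qed
  also have "\<dots> = exp (\<beta>\<^sup>2 * var_bound / 2)"
    unfolding var_bound_def by (simp add: sum_distrib_left sum_divide_distrib)
  finally show "(\<integral>g. exp (\<beta> * energy s g) \<partial>gauss_vec P) \<le> exp (\<beta>\<^sup>2 * var_bound / 2)" .
qed

definition quenched_log_part :: "real \<Rightarrow> real" where
  "quenched_log_part \<beta> = (\<integral>g. log_part \<beta> g \<partial>gauss_vec P)"

definition quenched_mean_energy :: "real \<Rightarrow> real" where
  "quenched_mean_energy \<beta> = (\<integral>g. mean_energy \<beta> g \<partial>gauss_vec P)"

lemma quenched_log_part_zero: "quenched_log_part 0 = ln (card S)"
  unfolding quenched_log_part_def log_part_zero by (simp add: gauss_vec.P.prob_space)

lemma quenched_log_part_nonneg: "0 \<le> quenched_log_part \<beta>"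
proof -
  obtain s where "s \<in> S"
    using states_nonempty by blast
  then have "(\<integral>g. \<beta> * energy s g \<partial>gauss_vec P) \<le> quenched_log_part \<beta>"
    unfolding quenched_log_part_def
    using integrable_energy integrable_log_part log_part_ge by (intro integral_mono) auto
  then show ?thesis
    using integral_energy by simp
qed

text \<open>Jensen's inequality for \<open>ln\<close>, via the tangent line \<open>ln u \<le> ln c + u / c - 1\<close> at the
  bound \<open>c\<close> on the annealed partition function.\<close>

lemma quenched_log_part_le: "quenched_log_part \<beta> \<le> ln (card S) + \<beta>\<^sup>2 * var_bound / 2"
proof -
  define c where "c = real (card S) * exp (\<beta>\<^sup>2 * var_bound / 2)"
  have c_pos: "0 < c"
    unfolding c_def using finite_states states_nonempty by (simp add: card_gt_0_iff)
  have part_fun_int: "integrable (gauss_vec P) (part_fun \<beta>)"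
    unfolding part_fun_def using integral_exp_energy_le(1) by auto
  have "(\<integral>g. part_fun \<beta> g \<partial>gauss_vec P) = (\<Sum>s\<in>S. \<integral>g. exp (\<beta> * energy s g) \<partial>gauss_vec P)"
    unfolding part_fun_def using integral_exp_energy_le(1) by (rule Bochner_Integration.integral_sum)
  also have "\<dots> \<le> c"
    unfolding c_def using integral_exp_energy_le(2) sum_mono[of S _ "\<lambda>_. exp (\<beta>\<^sup>2 * var_bound / 2)"]
    by simp
  finally have annealed: "(\<integral>g. part_fun \<beta> g \<partial>gauss_vec P) \<le> c" .
  have "log_part \<beta> g \<le> ln c + part_fun \<beta> g / c - 1" for g
    using ln_le_minus_one[of "part_fun \<beta> g / c"] part_fun_pos[of \<beta> g] c_pos
    by (simp add: log_part_def ln_div)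
  then have "quenched_log_part \<beta> \<le> (\<integral>g. ln c + part_fun \<beta> g / c - 1 \<partial>gauss_vec P)"
    unfolding quenched_log_part_def using integrable_log_part part_fun_int by (intro integral_mono) auto
  also have "\<dots> = ln c + (\<integral>g. part_fun \<beta> g \<partial>gauss_vec P) / c - 1"
    using part_fun_int by (simp add: gauss_vec.P.prob_space)
  also have "\<dots> \<le> ln c"
    using annealed c_pos by (simp add: divide_le_eq)
  also have "\<dots> = ln (card S) + \<beta>\<^sup>2 * var_bound / 2"
    unfolding c_def using finite_states states_nonempty by (simp add: ln_mult card_gt_0_iff)
  finally show ?thesis .
qed

lemma quenched_log_part_tangent:
  "quenched_log_part x + (y - x) * quenched_mean_energy x \<le> quenched_log_part y"
proof -
  have "(\<integral>g. log_part x g + (y - x) * mean_energy x g \<partial>gauss_vec P) \<le> quenched_log_part y"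
    unfolding quenched_log_part_def using integrable_log_part integrable_mean_energy log_part_tangent
    by (intro integral_mono) auto
  then show ?thesis
    unfolding quenched_log_part_def quenched_mean_energy_def
    using integrable_log_part integrable_mean_energy by simp
qed

lemma quenched_mean_energy_mono: "x \<le> y \<Longrightarrow> quenched_mean_energy x \<le> quenched_mean_energy y"
  using quenched_log_part_tangent by (rule supporting_slope_mono)

lemma quenched_mean_energy_le:
  "quenched_mean_energy \<beta> \<le> ln (card S) + (\<beta> + 1)\<^sup>2 * var_bound / 2"
  using quenched_log_part_tangent[of \<beta> "\<beta> + 1"] quenched_log_part_nonneg[of \<beta>]
    quenched_log_part_le[of "\<beta> + 1"]
  by simp

lemma quenched_mean_energy_ge:
  assumes "0 < \<beta>"
  shows "- ln (card S) / \<beta> \<le> quenched_mean_energy \<beta>"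
proof -
  have "- ln (card S) \<le> \<beta> * quenched_mean_energy \<beta>"
    using quenched_log_part_tangent[of \<beta> 0] quenched_log_part_nonneg[of \<beta>] quenched_log_part_zero
    by simp
  then show ?thesis
    by (metis assms minus_divide_left mult.commute pos_divide_le_eq)
qed

lemma abs_dev_log_part_slope_le:
  fixes x y \<delta> :: real
  assumes "0 < \<delta>"
  defines "D \<equiv> \<lambda>g. (log_part y g - log_part x g) / \<delta>"
  shows "(\<integral>g. \<bar>D g - (\<integral>h. D h \<partial>gauss_vec P)\<bar> \<partial>gauss_vec P) \<le> (\<bar>x\<bar> + \<bar>y\<bar>) / \<delta> * sqrt var_bound"
proof -
  have "coordwise_lipschitz P (\<lambda>X. \<bar>y\<bar> * A X + \<bar>x\<bar> * A X) (\<lambda>g. log_part y g - log_part x g)"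
    by (rule coordwise_lipschitz_diff[OF log_part_lipschitz log_part_lipschitz])
  then have "coordwise_lipschitz P (\<lambda>X. 1 / \<delta> * (\<bar>y\<bar> * A X + \<bar>x\<bar> * A X))
      (\<lambda>g. 1 / \<delta> * (log_part y g - log_part x g))"
    by (rule coordwise_lipschitz_scale) (use assms(1) in simp)
  moreover have "(\<lambda>g. 1 / \<delta> * (log_part y g - log_part x g)) = D"
    unfolding D_def by auto
  ultimately have "coordwise_lipschitz P (\<lambda>X. 1 / \<delta> * (\<bar>y\<bar> * A X + \<bar>x\<bar> * A X)) D"
    by simp
  then have "(\<integral>g. \<bar>D g - (\<integral>h. D h \<partial>gauss_vec P)\<bar> \<partial>gauss_vec P)
      \<le> sqrt (\<Sum>X\<in>P. (1 / \<delta> * (\<bar>y\<bar> * A X + \<bar>x\<bar> * A X))\<^sup>2)"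
    unfolding D_def using integrable_log_part
    by (intro gauss_vec_abs_dev_le[OF finite_disorder]) auto
  also have "(\<Sum>X\<in>P. (1 / \<delta> * (\<bar>y\<bar> * A X + \<bar>x\<bar> * A X))\<^sup>2)
      = (\<Sum>X\<in>P. ((\<bar>x\<bar> + \<bar>y\<bar>) / \<delta>)\<^sup>2 * (A X)\<^sup>2)"
    by (rule sum.cong) (simp_all add: power2_eq_square field_simps)
  also have "\<dots> = ((\<bar>x\<bar> + \<bar>y\<bar>) / \<delta>)\<^sup>2 * var_bound"
    unfolding var_bound_def by (simp add: sum_distrib_left)
  also have "sqrt \<dots> = (\<bar>x\<bar> + \<bar>y\<bar>) / \<delta> * sqrt var_bound"
    using assms(1) by (simp add: real_sqrt_mult)
  finally show ?thesis .
qed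

text \<open>The thermal mean energy is squeezed between the difference quotients of \<open>log_part\<close>,
  which concentrate; the difference of their means is controlled by the monotonicity of
  \<open>quenched_mean_energy\<close>.\<close>

lemma abs_dev_mean_energy_le:
  assumes "0 < \<delta>" and "\<delta> \<le> \<beta>"
  shows "(\<integral>g. \<bar>mean_energy \<beta> g - quenched_mean_energy \<beta>\<bar> \<partial>gauss_vec P)
    \<le> 4 * \<beta> / \<delta> * sqrt var_bound + (quenched_mean_energy (\<beta> + \<delta>) - quenched_mean_energy (\<beta> - \<delta>))"
proof -
  let ?E = "\<lambda>f. \<integral>g. f g \<partial>gauss_vec P"
  define up where "up g = (log_part (\<beta> + \<delta>) g - log_part \<beta> g) / \<delta>" for g
  define down where "down g = (log_part \<beta> g - log_part (\<beta> - \<delta>) g) / \<delta>" for g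
  have up_int: "integrable (gauss_vec P) up" and down_int: "integrable (gauss_vec P) down"
    unfolding up_def down_def using integrable_log_part by auto
  have "down g \<le> mean_energy \<beta> g" and "mean_energy \<beta> g \<le> up g" for g
    unfolding up_def down_def using log_part_tangent assms(1)
    by (rule supporting_slope_between_quotients)+
  then have "?E (\<lambda>g. \<bar>mean_energy \<beta> g - quenched_mean_energy \<beta>\<bar>)
      \<le> ?E (\<lambda>g. \<bar>up g - ?E up\<bar>) + ?E (\<lambda>g. \<bar>down g - ?E down\<bar>) + (?E up - ?E down)"
    unfolding quenched_mean_energy_def using integrable_mean_energy down_int up_int
    by (intro gauss_vec.abs_dev_le_sandwich)
  also have "?E (\<lambda>g. \<bar>up g - ?E up\<bar>) \<le> (\<bar>\<beta>\<bar> + \<bar>\<beta> + \<delta>\<bar>) / \<delta> * sqrt var_bound"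
    unfolding up_def using assms(1) by (rule abs_dev_log_part_slope_le)
  also have "?E (\<lambda>g. \<bar>down g - ?E down\<bar>) \<le> (\<bar>\<beta> - \<delta>\<bar> + \<bar>\<beta>\<bar>) / \<delta> * sqrt var_bound"
    unfolding down_def using assms(1) by (rule abs_dev_log_part_slope_le)
  also have "?E up - ?E down \<le> quenched_mean_energy (\<beta> + \<delta>) - quenched_mean_energy (\<beta> - \<delta>)"
    using supporting_slope_between_quotients(1)[OF quenched_log_part_tangent assms(1), of "\<beta> + \<delta>"]
      supporting_slope_between_quotients(2)[OF quenched_log_part_tangent assms(1), of "\<beta> - \<delta>"]
    unfolding up_def down_def quenched_log_part_def using integrable_log_part by simp
  also have "(\<bar>\<beta>\<bar> + \<bar>\<beta> + \<delta>\<bar>) / \<delta> * sqrt var_bound + (\<bar>\<beta> - \<delta>\<bar> + \<bar>\<beta>\<bar>) / \<delta> * sqrt var_bound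
      = 4 * \<beta> / \<delta> * sqrt var_bound"
    using assms by (simp add: field_simps)
  finally show ?thesis
    by simp
qed

end

section \<open>Real-variable estimates\<close>

lemma abs_integral_le_dominating:
  fixes f h :: "'a::euclidean_space \<Rightarrow> real"
  assumes "h integrable_on S" and "\<And>x. x \<in> S \<Longrightarrow> \<bar>f x\<bar> \<le> h x"
  shows "\<bar>integral S f\<bar> \<le> integral S h"
proof (cases "f integrable_on S")
  case True
  have "integral S f \<le> integral S h"
    using assms True by (intro integral_le) (auto simp: abs_le_iff)
  moreover have "- h x \<le> f x" if "x \<in> S" for x
    using assms(2)[OF that] by linarith
  then have "integral S (\<lambda>x. - h x) \<le> integral S f"
    using assms(1) True by (intro integral_le integrable_neg)
  ultimately show ?thesis
    by (simp add: abs_le_iff)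
next
  case False
  have "0 \<le> integral S h"
    using assms by (intro integral_nonneg) (auto intro: order_trans[OF abs_ge_zero])
  then show ?thesis
    using False by (simp add: not_integrable_integral)
qed

lemma integral_shift_diff_le_mono:
  fixes f :: "real \<Rightarrow> real"
  assumes mono: "mono_on {a - \<delta>..b + \<delta>} f" and "0 \<le> \<delta>" and "a \<le> b"
  shows "integral {a..b} (\<lambda>t. f (t + \<delta>) - f (t - \<delta>)) \<le> 2 * \<delta> * (f (b + \<delta>) - f (a - \<delta>))"
proof -
  let ?I = "\<lambda>u v. integral {u..v} f"
  have int: "f integrable_on {u..v}" if "a - \<delta> \<le> u" "v \<le> b + \<delta>" for u v
    using that by (intro integrable_on_mono_on mono_on_subset[OF mono]) auto
  have shift: "integral {a..b} (\<lambda>t. f (t + c)) = ?I (a + c) (b + c)"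
    and shift_int: "(\<lambda>t. f (t + c)) integrable_on {a..b}" if "\<bar>c\<bar> \<le> \<delta>" for c
    using integral_shift_Icc_real[of a b f c] integrable_on_shift_Icc_real[of f c a b] int[of "a + c" "b + c"] that
    by (auto simp: o_def add.commute)
  have "integral {a..b} (\<lambda>t. f (t + \<delta>) - f (t - \<delta>)) = ?I (a + \<delta>) (b + \<delta>) - ?I (a - \<delta>) (b - \<delta>)"
    using shift[of \<delta>] shift[of "- \<delta>"] shift_int[of \<delta>] shift_int[of "- \<delta>"] assms(2)
    by (simp add: integral_diff)
  also have "\<dots> = ?I (b - \<delta>) (b + \<delta>) - ?I (a - \<delta>) (a + \<delta>)"
  proof -
    have "?I (a - \<delta>) (a + \<delta>) + ?I (a + \<delta>) (b + \<delta>) = ?I (a - \<delta>) (b + \<delta>)"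
      by (rule Henstock_Kurzweil_Integration.integral_combine) (use assms(2,3) int in auto)
    moreover have "?I (a - \<delta>) (b - \<delta>) + ?I (b - \<delta>) (b + \<delta>) = ?I (a - \<delta>) (b + \<delta>)"
      by (rule Henstock_Kurzweil_Integration.integral_combine) (use assms(2,3) int in auto)
    ultimately show ?thesis by linarith
  qed
  also have "\<dots> \<le> 2 * \<delta> * f (b + \<delta>) - 2 * \<delta> * f (a - \<delta>)"
  proof -
    have "?I (b - \<delta>) (b + \<delta>) \<le> integral {b - \<delta>..b + \<delta>} (\<lambda>_. f (b + \<delta>))"
      using assms(2,3) int by (intro integral_le mono_onD[OF mono]) auto
    moreover have "integral {a - \<delta>..a + \<delta>} (\<lambda>_. f (a - \<delta>)) \<le> ?I (a - \<delta>) (a + \<delta>)"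
      using assms(2,3) int by (intro integral_le mono_onD[OF mono]) auto
    ultimately show ?thesis
      using assms(2) by simp
  qed
  finally show ?thesis
    by (simp add: algebra_simps)
qed

lemma small_of_tradeoff_bound:
  fixes f :: "'a \<Rightarrow> real" and n :: "'a \<Rightarrow> nat"
  assumes "0 < \<delta>\<^sub>0" and "0 \<le> A" and "0 \<le> B"
    and bound: "\<And>x \<delta>. P x \<Longrightarrow> 0 < n x \<Longrightarrow> 0 < \<delta> \<Longrightarrow> \<delta> \<le> \<delta>\<^sub>0 \<Longrightarrow>
      \<bar>f x\<bar> \<le> A / (\<delta> * sqrt (n x)) + B * \<delta>"
  shows "\<forall>\<epsilon>>0. \<exists>N. \<forall>x. P x \<and> n x \<ge> N \<longrightarrow> \<bar>f x\<bar> < \<epsilon>"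
proof (intro allI impI)
  fix \<epsilon> :: real assume "0 < \<epsilon>"
  define \<delta> where "\<delta> = min \<delta>\<^sub>0 (\<epsilon> / (2 * (B + 1)))"
  have \<delta>_pos: "0 < \<delta>" and \<delta>_le: "\<delta> \<le> \<delta>\<^sub>0"
    unfolding \<delta>_def using assms(1,3) \<open>0 < \<epsilon>\<close> by simp_all
  have "B * \<delta> \<le> B * (\<epsilon> / (2 * (B + 1)))"
    unfolding \<delta>_def using assms(3) by (intro mult_left_mono) auto
  also have "\<dots> < \<epsilon> / 2"
    using assms(3) \<open>0 < \<epsilon>\<close> by (simp add: field_simps)
  finally have second: "B * \<delta> < \<epsilon> / 2" .
  define N where "N = nat \<lceil>(2 * A / (\<delta> * \<epsilon>))\<^sup>2\<rceil> + 1"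
  show "\<exists>N. \<forall>x. P x \<and> n x \<ge> N \<longrightarrow> \<bar>f x\<bar> < \<epsilon>"
  proof (intro exI allI impI)
    fix x assume x: "P x \<and> N \<le> n x"
    then have "(2 * A / (\<delta> * \<epsilon>))\<^sup>2 < n x"
      unfolding N_def by linarith
    then have "2 * A / (\<delta> * \<epsilon>) < sqrt (n x)"
      by (rule real_less_rsqrt)
    moreover have "0 < n x"
      using x unfolding N_def by simp
    ultimately have first: "A / (\<delta> * sqrt (n x)) < \<epsilon> / 2"
      using \<delta>_pos \<open>0 < \<epsilon>\<close> by (simp add: field_simps)
    show "\<bar>f x\<bar> < \<epsilon>"
      using bound[OF conjunct1[OF x] \<open>0 < n x\<close> \<delta>_pos \<delta>_le] first second by linarith
  qed
qed

section \<open>The replicated spin glass\<close>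

definition replica_configs :: "'s set \<Rightarrow> ('r::finite \<Rightarrow> 's \<Rightarrow> real) set" where
  "replica_configs \<Lambda> = PiE UNIV (\<lambda>_. configs \<Lambda>)"

definition replica_coeff :: "('s set \<Rightarrow> real) \<Rightarrow> ('r::finite \<Rightarrow> 's \<Rightarrow> real) \<Rightarrow> 's set \<Rightarrow> real" where
  "replica_coeff Delta s X = Delta X * (\<Sum>k\<in>UNIV. spinprod (s k) X)"

lemma finite_configs: "finite \<Lambda> \<Longrightarrow> finite (configs \<Lambda>)"
  unfolding configs_def by (intro finite_PiE) auto

lemma card_configs: "finite \<Lambda> \<Longrightarrow> card (configs \<Lambda>) = 2 ^ card \<Lambda>"
  unfolding configs_def by (simp add: card_PiE numeral_2_eq_2)

lemma configs_nonempty: "configs \<Lambda> \<noteq> {}"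
  unfolding configs_def by (simp add: PiE_eq_empty_iff)

lemma finite_replica_configs: "finite \<Lambda> \<Longrightarrow> finite (replica_configs \<Lambda>)"
  unfolding replica_configs_def by (intro finite_PiE) (auto simp: finite_configs)

lemma replica_configs_nonempty: "replica_configs \<Lambda> \<noteq> {}"
  unfolding replica_configs_def by (simp add: PiE_eq_empty_iff configs_nonempty)

lemma ln_card_replica_configs_le:
  assumes "finite \<Lambda>"
  shows "ln (card (replica_configs \<Lambda> :: ('r::finite \<Rightarrow> 's \<Rightarrow> real) set)) \<le> real (card \<Lambda>) * real CARD('r)"
proof -
  have "card (replica_configs \<Lambda> :: ('r \<Rightarrow> 's \<Rightarrow> real) set) = 2 ^ (card \<Lambda> * CARD('r))"
    using assms unfolding replica_configs_def by (simp add: card_PiE card_configs power_mult)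
  then have "ln (card (replica_configs \<Lambda> :: ('r \<Rightarrow> 's \<Rightarrow> real) set)) = real (card \<Lambda> * CARD('r)) * ln 2"
    by (simp add: ln_realpow)
  also have "\<dots> \<le> real (card \<Lambda> * CARD('r))"
    using ln_2_less_1 by (simp add: mult_left_le)
  finally show ?thesis by simp
qed

lemma abs_spinprod_le:
  assumes "\<sigma> \<in> configs \<Lambda>" and "X \<subseteq> \<Lambda>"
  shows "\<bar>spinprod \<sigma> X\<bar> \<le> 1"
proof -
  have "\<bar>\<sigma> i\<bar> = 1" if "i \<in> X" for i
    using assms that unfolding configs_def by (auto simp: PiE_def Pi_def)
  then show ?thesis
    unfolding spinprod_def by (simp add: abs_prod)
qed

lemma abs_replica_coeff_le:
  assumes "s \<in> replica_configs \<Lambda>" and "X \<subseteq> \<Lambda>"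
  shows "\<bar>replica_coeff Delta (s :: 'r::finite \<Rightarrow> 's \<Rightarrow> real) X\<bar> \<le> real CARD('r) * \<bar>Delta X\<bar>"
proof -
  have "\<bar>\<Sum>k\<in>UNIV. spinprod (s k) X\<bar> \<le> (\<Sum>k\<in>(UNIV :: 'r set). 1)"
    using assms unfolding replica_configs_def
    by (intro order_trans[OF sum_abs] sum_mono abs_spinprod_le) auto
  then show ?thesis
    unfolding replica_coeff_def by (simp add: abs_mult mult.commute mult_left_mono)
qed

lemma sum_Ham_replicas:
  "(\<Sum>k\<in>UNIV. Ham \<Lambda> Delta g ((s :: 'r::finite \<Rightarrow> 's \<Rightarrow> real) k))
    = - (\<Sum>X\<in>Pow \<Lambda>. replica_coeff Delta s X * g X)"
proof -
  have "(\<Sum>k\<in>UNIV. \<Sum>X\<in>Pow \<Lambda>. Delta X * g X * spinprod (s k) X)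
      = (\<Sum>X\<in>Pow \<Lambda>. \<Sum>k\<in>UNIV. Delta X * g X * spinprod (s k) X)"
    by (rule sum.swap)
  then show ?thesis
    unfolding Ham_def replica_coeff_def by (simp add: sum_negf sum_distrib_left mult_ac)
qed

text \<open>In a volume \<open>\<Lambda>\<close>, the \<open>R\<close>-replica system is a Gaussian energy model whose states are the
  replica configurations and whose energy is minus the total Hamiltonian of the replicas, with
  \<open>J\<^sub>X = Delta X * g X\<close> for standard Gaussian \<open>g\<close>.\<close>

locale spin_glass_volume =
  fixes \<Lambda> :: "'s set" and Delta :: "'s set \<Rightarrow> real" and replicas :: "'r::finite itself"
  assumes finite_volume: "finite \<Lambda>" and volume_nonempty: "\<Lambda> \<noteq> {}"
begin

sublocale replica: gaussian_energy_model "replica_configs \<Lambda> :: ('r \<Rightarrow> 's \<Rightarrow> real) set" "Pow \<Lambda>"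
  "replica_coeff Delta" "\<lambda>X. real CARD('r) * \<bar>Delta X\<bar>"
  by unfold_locales
    (auto simp: finite_volume finite_replica_configs replica_configs_nonempty abs_replica_coeff_le)

lemma card_volume_pos: "0 < real (card \<Lambda>)"
  using finite_volume volume_nonempty by (simp add: card_gt_0_iff)

lemma Jmeasure_eq: "Jmeasure \<Lambda> = gauss_vec (Pow \<Lambda>)"
  unfolding Jmeasure_def std_gauss_def ..

lemma energy_eq: "replica.energy s g = - (\<Sum>k\<in>UNIV. Ham \<Lambda> Delta g (s k))"
  unfolding replica.energy_def sum_Ham_replicas by simp

lemma Omega_eq_gibbs: "Omega \<Lambda> Delta \<beta> g F = replica.gibbs \<beta> g F"
proof -
  have "(Zpart \<Lambda> Delta \<beta> g) ^ CARD('r)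
      = (\<Prod>k\<in>(UNIV :: 'r set). \<Sum>\<sigma>\<in>configs \<Lambda>. exp (- \<beta> * Ham \<Lambda> Delta g \<sigma>))"
    unfolding Zpart_def by simp
  also have "\<dots> = (\<Sum>s\<in>(replica_configs \<Lambda> :: ('r \<Rightarrow> 's \<Rightarrow> real) set).
      \<Prod>k\<in>UNIV. exp (- \<beta> * Ham \<Lambda> Delta g (s k)))"
    unfolding replica_configs_def by (rule prod_sum_PiE) (auto simp: finite_configs finite_volume)
  also have "\<dots> = replica.part_fun \<beta> g"
    unfolding replica.part_fun_def energy_eq by (simp add: sum_distrib_left sum_negf flip: exp_sum)
  finally show ?thesis
    unfolding Omega_def replica.gibbs_def energy_eq replica_configs_def[symmetric] by simp
qed

lemma borel_measurable_Ham [measurable]: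
  "(\<lambda>g. Ham \<Lambda> Delta g \<sigma>) \<in> borel_measurable (gauss_vec (Pow \<Lambda>))"
  unfolding Ham_def by measurable

lemma borel_measurable_Omega_obs [measurable]:
  fixes G :: "real^'r^'r \<Rightarrow> real"
  shows "(\<lambda>g. Omega \<Lambda> Delta \<beta> g (obs \<Lambda> Delta G)) \<in> borel_measurable (gauss_vec (Pow \<Lambda>))"
  unfolding Omega_eq_gibbs replica.gibbs_def replica.part_fun_def by measurable

lemma abs_Omega_obs_le:
  fixes G :: "real^'r^'r \<Rightarrow> real"
  assumes "\<And>M. \<bar>G M\<bar> \<le> 1"
  shows "\<bar>Omega \<Lambda> Delta \<beta> g (obs \<Lambda> Delta G)\<bar> \<le> 1"
  unfolding Omega_eq_gibbs obs_def by (intro replica.gibbs_abs_le assms)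

lemma abs_Ham_le: "\<sigma> \<in> configs \<Lambda> \<Longrightarrow> \<bar>Ham \<Lambda> Delta g \<sigma>\<bar> \<le> replica.energy_bound g"
  unfolding Ham_def replica.energy_bound_def abs_minus_cancel
proof (rule order_trans[OF sum_abs], rule sum_mono)
  fix X assume "\<sigma> \<in> configs \<Lambda>" and "X \<in> Pow \<Lambda>"
  then have "\<bar>spinprod \<sigma> X\<bar> \<le> 1"
    by (intro abs_spinprod_le) auto
  then have "\<bar>Delta X * g X * spinprod \<sigma> X\<bar> \<le> \<bar>Delta X\<bar> * \<bar>g X\<bar>"
    by (simp add: abs_mult mult_left_le)
  also have "\<dots> \<le> real CARD('r) * \<bar>Delta X\<bar> * \<bar>g X\<bar>"
    using mult_right_mono[of 1 "real CARD('r)" "\<bar>Delta X\<bar> * \<bar>g X\<bar>"] by (simp add: mult.assoc)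
  finally show "\<bar>Delta X * g X * spinprod \<sigma> X\<bar> \<le> real CARD('r) * \<bar>Delta X\<bar> * \<bar>g X\<bar>" .
qed

definition energy_density :: "'r \<Rightarrow> real \<Rightarrow> ('s set \<Rightarrow> real) \<Rightarrow> real" where
  "energy_density l \<beta> g = Omega \<Lambda> Delta \<beta> g (\<lambda>s. Ham \<Lambda> Delta g (s l) / real (card \<Lambda>))"

lemma borel_measurable_energy_density [measurable]:
  "energy_density l \<beta> \<in> borel_measurable (gauss_vec (Pow \<Lambda>))"
  unfolding energy_density_def Omega_eq_gibbs replica.gibbs_def replica.part_fun_def by measurable

lemma sum_energy_density: "(\<Sum>l\<in>UNIV. energy_density l \<beta> g) = - replica.mean_energy \<beta> g / real (card \<Lambda>)"
proof -
  have "(\<Sum>l\<in>UNIV. energy_density l \<beta> g)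
      = replica.gibbs \<beta> g (\<lambda>s. \<Sum>l\<in>UNIV. Ham \<Lambda> Delta g (s l) / real (card \<Lambda>))"
    unfolding energy_density_def Omega_eq_gibbs replica.gibbs_sum ..
  also have "\<dots> = replica.gibbs \<beta> g (\<lambda>s. - replica.energy s g / real (card \<Lambda>))"
    unfolding energy_eq by (simp add: sum_divide_distrib)
  also have "\<dots> = - replica.mean_energy \<beta> g / real (card \<Lambda>)"
    unfolding replica.mean_energy_def replica.gibbs_def by (simp add: sum_negf flip: sum_divide_distrib)
  finally show ?thesis .
qed

lemma integrable_energy_density_mult:
  assumes "V \<in> borel_measurable (gauss_vec (Pow \<Lambda>))" and "\<And>g. \<bar>V g\<bar> \<le> 1"
  shows "integrable (gauss_vec (Pow \<Lambda>)) (\<lambda>g. energy_density l \<beta> g * V g)"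
proof (rule replica.integrable_energy_dominated)
  fix g
  have "\<bar>energy_density l \<beta> g\<bar> \<le> 0 + 1 / real (card \<Lambda>) * replica.energy_bound g"
    unfolding energy_density_def Omega_eq_gibbs
  proof (rule replica.gibbs_abs_le)
    fix s :: "'r \<Rightarrow> 's \<Rightarrow> real" assume "s \<in> replica_configs \<Lambda>"
    then have "\<bar>Ham \<Lambda> Delta g (s l)\<bar> \<le> replica.energy_bound g"
      by (intro abs_Ham_le) (auto simp: replica_configs_def)
    then show "\<bar>Ham \<Lambda> Delta g (s l) / real (card \<Lambda>)\<bar> \<le> 0 + 1 / real (card \<Lambda>) * replica.energy_bound g"
      using card_volume_pos by (simp add: abs_divide divide_right_mono)
  qed
  moreover have "\<bar>energy_density l \<beta> g * V g\<bar> \<le> \<bar>energy_density l \<beta> g\<bar>"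
    using assms(2)[of g] by (simp add: abs_mult mult_left_le)
  ultimately show "\<bar>energy_density l \<beta> g * V g\<bar> \<le> 0 + 1 / real (card \<Lambda>) * replica.energy_bound g"
    by linarith
qed (use assms(1) in measurable)

lemma Delta2_eq_covariance:
  fixes G :: "real^'r^'r \<Rightarrow> real" and \<beta> :: real
  assumes "\<And>M. \<bar>G M\<bar> \<le> 1"
  defines "W \<equiv> \<lambda>g. Omega \<Lambda> Delta \<beta> g (obs \<Lambda> Delta G)"
  shows "Delta2 \<Lambda> Delta G \<beta> = - ((\<integral>g. replica.mean_energy \<beta> g * W g \<partial>gauss_vec (Pow \<Lambda>))
      - replica.quenched_mean_energy \<beta> * (\<integral>g. W g \<partial>gauss_vec (Pow \<Lambda>))) / real (card \<Lambda>)"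
proof -
  let ?E = "\<lambda>f. \<integral>g. f g \<partial>gauss_vec (Pow \<Lambda>)"
  have W_meas: "W \<in> borel_measurable (gauss_vec (Pow \<Lambda>))"
    unfolding W_def by measurable
  have W_bounded: "\<bar>W g\<bar> \<le> 1" for g
    unfolding W_def by (rule abs_Omega_obs_le[where G=G, OF assms(1)])
  have int: "integrable (gauss_vec (Pow \<Lambda>)) (\<lambda>g. energy_density l \<beta> g * W g)"
    "integrable (gauss_vec (Pow \<Lambda>)) (energy_density l \<beta>)" for l
    using integrable_energy_density_mult[OF W_meas W_bounded]
      integrable_energy_density_mult[of "\<lambda>_. 1"] by simp_all
  have "Delta2 \<Lambda> Delta G \<beta>
      = (\<Sum>l\<in>UNIV. ?E (\<lambda>g. energy_density l \<beta> g * W g) - ?E (energy_density l \<beta>) * ?E W)"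
    unfolding Delta2_def Av_def Jmeasure_eq energy_density_def W_def ..
  also have "\<dots> = ?E (\<lambda>g. \<Sum>l\<in>UNIV. energy_density l \<beta> g * W g)
      - ?E (\<lambda>g. \<Sum>l\<in>UNIV. energy_density l \<beta> g) * ?E W"
    using int by (simp add: sum_subtractf sum_distrib_right Bochner_Integration.integral_sum)
  also have "\<dots> = - (?E (\<lambda>g. replica.mean_energy \<beta> g * W g)
      - replica.quenched_mean_energy \<beta> * ?E W) / real (card \<Lambda>)"
    unfolding sum_distrib_right[symmetric] sum_energy_density replica.quenched_mean_energy_def
    using card_volume_pos by (simp add: field_simps)
  finally show ?thesis .
qed

lemma abs_Delta2_le:
  fixes G :: "real^'r^'r \<Rightarrow> real"
  assumes "\<And>M. \<bar>G M\<bar> \<le> 1" and "0 < \<delta>" and "\<delta> \<le> \<beta>"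
  shows "\<bar>Delta2 \<Lambda> Delta G \<beta>\<bar>
    \<le> (4 * \<beta> / \<delta> * sqrt replica.var_bound
        + (replica.quenched_mean_energy (\<beta> + \<delta>) - replica.quenched_mean_energy (\<beta> - \<delta>)))
      / real (card \<Lambda>)"
proof -
  have "(\<lambda>g. Omega \<Lambda> Delta \<beta> g (obs \<Lambda> Delta G)) \<in> borel_measurable (gauss_vec (Pow \<Lambda>))"
    by measurable
  then have "\<bar>Delta2 \<Lambda> Delta G \<beta>\<bar>
      \<le> (\<integral>g. \<bar>replica.mean_energy \<beta> g - replica.quenched_mean_energy \<beta>\<bar> \<partial>gauss_vec (Pow \<Lambda>))
        / real (card \<Lambda>)"
    unfolding Delta2_eq_covariance[OF assms(1)] abs_divide abs_minus_cancel replica.quenched_mean_energy_def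
    using gauss_vec.abs_covariance_le_abs_dev[OF replica.integrable_mean_energy _ abs_Omega_obs_le[where G=G, OF assms(1)]]
    by (simp add: divide_right_mono)
  also have "\<dots> \<le> (4 * \<beta> / \<delta> * sqrt replica.var_bound
        + (replica.quenched_mean_energy (\<beta> + \<delta>) - replica.quenched_mean_energy (\<beta> - \<delta>)))
      / real (card \<Lambda>)"
    using replica.abs_dev_mean_energy_le[OF assms(2,3)] card_volume_pos by (simp add: divide_right_mono)
  finally show ?thesis .
qed

text \<open>The second-difference term is not small pointwise in \<open>\<beta>\<close>, only after integration:
  by monotonicity of \<open>quenched_mean_energy\<close> its integral telescopes to \<open>O(\<delta>)\<close>.\<close>

lemma abs_integral_Delta2_le:
  fixes G :: "real^'r^'r \<Rightarrow> real" and \<beta>1 \<beta>2 \<delta> :: real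
  assumes G_bounded: "\<And>M. \<bar>G M\<bar> \<le> 1" and "\<beta>1 \<le> \<beta>2" and "0 < \<delta>" and "\<delta> \<le> \<beta>1"
  shows "\<bar>integral {\<beta>1..\<beta>2} (Delta2 \<Lambda> Delta G)\<bar>
    \<le> ((\<beta>2 - \<beta>1) * (4 * \<beta>2 / \<delta> * sqrt replica.var_bound)
        + 2 * \<delta> * (replica.quenched_mean_energy (\<beta>2 + \<delta>) - replica.quenched_mean_energy (\<beta>1 - \<delta>)))
      / real (card \<Lambda>)"
proof -
  let ?m = "replica.quenched_mean_energy"
  define c where "c = 4 * \<beta>2 / \<delta> * sqrt replica.var_bound"
  define h where "h \<beta> = (c + (?m (\<beta> + \<delta>) - ?m (\<beta> - \<delta>))) / real (card \<Lambda>)" for \<beta>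
  have m_mono: "mono_on A ?m" for A
    by (auto intro: mono_onI replica.quenched_mean_energy_mono)
  have "\<bar>Delta2 \<Lambda> Delta G \<beta>\<bar> \<le> h \<beta>" if "\<beta> \<in> {\<beta>1..\<beta>2}" for \<beta>
  proof -
    have "4 * \<beta> / \<delta> * sqrt replica.var_bound \<le> c"
      unfolding c_def using that assms(3) replica.var_bound_nonneg
      by (intro mult_right_mono divide_right_mono) auto
    then show ?thesis
      unfolding h_def using abs_Delta2_le[where G=G, OF G_bounded assms(3), of \<beta>] that assms(4) card_volume_pos
      by (smt (verit) atLeastAtMost_iff divide_right_mono)
  qed
  moreover have diff_int: "(\<lambda>\<beta>. ?m (\<beta> + \<delta>) - ?m (\<beta> - \<delta>)) integrable_on {\<beta>1..\<beta>2}"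
    by (intro integrable_diff integrable_on_mono_on mono_onI replica.quenched_mean_energy_mono) auto
  then have "h integrable_on {\<beta>1..\<beta>2}"
    unfolding h_def by (intro integrable_on_divide integrable_add[OF integrable_const_ivl diff_int])
  ultimately have "\<bar>integral {\<beta>1..\<beta>2} (Delta2 \<Lambda> Delta G)\<bar> \<le> integral {\<beta>1..\<beta>2} h"
    by (intro abs_integral_le_dominating)
  also have "integral {\<beta>1..\<beta>2} h
      = ((\<beta>2 - \<beta>1) * c + integral {\<beta>1..\<beta>2} (\<lambda>\<beta>. ?m (\<beta> + \<delta>) - ?m (\<beta> - \<delta>))) / real (card \<Lambda>)"
    unfolding h_def using integral_add[OF integrable_const_ivl[where c=c] diff_int] assms(2) by simp
  also have "integral {\<beta>1..\<beta>2} (\<lambda>\<beta>. ?m (\<beta> + \<delta>) - ?m (\<beta> - \<delta>)) \<le> 2 * \<delta> * (?m (\<beta>2 + \<delta>) - ?m (\<beta>1 - \<delta>))"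
    using m_mono assms(2,3) by (intro integral_shift_diff_le_mono) auto
  finally show ?thesis
    unfolding c_def using card_volume_pos by (simp add: divide_right_mono)
qed

lemma var_bound_le:
  assumes "(\<Sum>X\<in>Pow \<Lambda>. (Delta X)\<^sup>2) \<le> c * real (card \<Lambda>)"
  shows "replica.var_bound \<le> (real CARD('r))\<^sup>2 * c * real (card \<Lambda>)"
proof -
  have "replica.var_bound = (real CARD('r))\<^sup>2 * (\<Sum>X\<in>Pow \<Lambda>. (Delta X)\<^sup>2)"
    unfolding replica.var_bound_def by (simp add: power_mult_distrib sum_distrib_left)
  then show ?thesis
    using assms by (simp add: mult.assoc mult_left_mono)
qed

lemma quenched_mean_energy_diff_le:
  assumes "(\<Sum>X\<in>Pow \<Lambda>. (Delta X)\<^sup>2) \<le> c * real (card \<Lambda>)" and "0 < x"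
  defines "R \<equiv> real CARD('r)"
  shows "replica.quenched_mean_energy y - replica.quenched_mean_energy x
    \<le> ((1 + 1 / x) * R + (y + 1)\<^sup>2 * R\<^sup>2 * c / 2) * real (card \<Lambda>)"
proof -
  let ?n = "real (card \<Lambda>)" and ?L = "ln (card (replica_configs \<Lambda> :: ('r \<Rightarrow> 's \<Rightarrow> real) set))"
  have L_le: "?L \<le> ?n * R"
    unfolding R_def using finite_volume by (rule ln_card_replica_configs_le)
  have "replica.quenched_mean_energy y \<le> ?L + (y + 1)\<^sup>2 * replica.var_bound / 2"
    by (rule replica.quenched_mean_energy_le)
  also have "\<dots> \<le> ?n * R + (y + 1)\<^sup>2 * (R\<^sup>2 * c * ?n) / 2"
    using L_le var_bound_le[OF assms(1)] unfolding R_def by (intro add_mono divide_right_mono mult_left_mono) auto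
  finally have upper: "replica.quenched_mean_energy y \<le> ?n * R + (y + 1)\<^sup>2 * (R\<^sup>2 * c * ?n) / 2" .
  have "- (?n * R) / x \<le> - ?L / x"
    using L_le assms(2) by (simp add: divide_right_mono)
  also have "\<dots> \<le> replica.quenched_mean_energy x"
    using assms(2) by (rule replica.quenched_mean_energy_ge)
  finally show ?thesis
    using upper by (simp add: field_simps)
qed

lemma abs_integral_Delta2_le_stable:
  fixes G :: "real^'r^'r \<Rightarrow> real" and \<beta>1 \<beta>2 \<delta> c :: real
  assumes G_bounded: "\<And>M. \<bar>G M\<bar> \<le> 1" and "\<beta>1 \<le> \<beta>2" and "0 < \<delta>" and "\<delta> \<le> \<beta>1 / 2" and "\<delta> \<le> 1"
    and "0 \<le> c" and stable: "(\<Sum>X\<in>Pow \<Lambda>. (Delta X)\<^sup>2) \<le> c * real (card \<Lambda>)"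
  defines "R \<equiv> real CARD('r)"
  shows "\<bar>integral {\<beta>1..\<beta>2} (Delta2 \<Lambda> Delta G)\<bar>
    \<le> (\<beta>2 - \<beta>1) * 4 * \<beta>2 * R * sqrt c / (\<delta> * sqrt (card \<Lambda>))
      + (2 * (1 + 2 / \<beta>1) * R + (\<beta>2 + 2)\<^sup>2 * R\<^sup>2 * c) * \<delta>"
proof -
  let ?m = "replica.quenched_mean_energy" and ?n = "real (card \<Lambda>)"
  define q where "q = sqrt ?n"
  have q_pos: "0 < q" and n_eq: "?n = q * q"
    unfolding q_def using card_volume_pos by simp_all
  have "sqrt replica.var_bound \<le> R * sqrt c * q"
    using real_sqrt_le_mono[OF var_bound_le[OF stable]] unfolding R_def q_def by (simp add: real_sqrt_mult)
  then have "(\<beta>2 - \<beta>1) * (4 * \<beta>2 / \<delta> * sqrt replica.var_bound) / ?n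
      \<le> (\<beta>2 - \<beta>1) * (4 * \<beta>2 / \<delta> * (R * sqrt c * q)) / ?n"
    using assms(2-4) card_volume_pos by (intro divide_right_mono mult_left_mono) auto
  also have "\<dots> = (\<beta>2 - \<beta>1) * 4 * \<beta>2 * R * sqrt c / (\<delta> * q)"
    unfolding n_eq using q_pos assms(3) by (simp add: field_simps)
  finally have first: "(\<beta>2 - \<beta>1) * (4 * \<beta>2 / \<delta> * sqrt replica.var_bound) / ?n
      \<le> (\<beta>2 - \<beta>1) * 4 * \<beta>2 * R * sqrt c / (\<delta> * q)" .
  have "?m (\<beta>2 + \<delta>) - ?m (\<beta>1 - \<delta>) \<le> ((1 + 1 / (\<beta>1 - \<delta>)) * R + (\<beta>2 + \<delta> + 1)\<^sup>2 * R\<^sup>2 * c / 2) * ?n"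
    unfolding R_def using stable assms(3,4) by (intro quenched_mean_energy_diff_le) auto
  also have "\<dots> \<le> ((1 + 2 / \<beta>1) * R + (\<beta>2 + 2)\<^sup>2 * R\<^sup>2 * c / 2) * ?n"
  proof -
    have "1 / (\<beta>1 - \<delta>) \<le> 2 / \<beta>1"
      using assms(3,4) by (simp add: field_simps)
    then have "(1 + 1 / (\<beta>1 - \<delta>)) * R \<le> (1 + 2 / \<beta>1) * R"
      unfolding R_def by (intro mult_right_mono) auto
    moreover have "(\<beta>2 + \<delta> + 1)\<^sup>2 * R\<^sup>2 * c / 2 \<le> (\<beta>2 + 2)\<^sup>2 * R\<^sup>2 * c / 2"
      using assms(2-6) by (intro divide_right_mono mult_right_mono power_mono) auto
    ultimately have "(1 + 1 / (\<beta>1 - \<delta>)) * R + (\<beta>2 + \<delta> + 1)\<^sup>2 * R\<^sup>2 * c / 2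
        \<le> (1 + 2 / \<beta>1) * R + (\<beta>2 + 2)\<^sup>2 * R\<^sup>2 * c / 2"
      by (rule add_mono)
    then show ?thesis
      by (rule mult_right_mono) simp
  qed
  finally have "2 * \<delta> * (?m (\<beta>2 + \<delta>) - ?m (\<beta>1 - \<delta>)) / ?n
      \<le> 2 * \<delta> * (((1 + 2 / \<beta>1) * R + (\<beta>2 + 2)\<^sup>2 * R\<^sup>2 * c / 2) * ?n) / ?n"
    using assms(3) card_volume_pos by (intro divide_right_mono mult_left_mono) auto
  also have "\<dots> = (2 * (1 + 2 / \<beta>1) * R + (\<beta>2 + 2)\<^sup>2 * R\<^sup>2 * c) * \<delta>"
    using card_volume_pos by (simp add: field_simps)
  finally have second: "2 * \<delta> * (?m (\<beta>2 + \<delta>) - ?m (\<beta>1 - \<delta>)) / ?n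
      \<le> (2 * (1 + 2 / \<beta>1) * R + (\<beta>2 + 2)\<^sup>2 * R\<^sup>2 * c) * \<delta>" .
  have "\<delta> \<le> \<beta>1"
    using assms(3,4) by simp
  from abs_integral_Delta2_le[where G=G, OF G_bounded assms(2,3) this] first second
  show ?thesis
    unfolding q_def add_divide_distrib by linarith
qed

end

text \<open>Empty boxes have \<open>card \<Lambda> = 0\<close> and \<open>1 / 0 = 0\<close>, so thermodynamic stability gives no
  information about them.\<close>

lemma thermo_stable_sum_le:
  assumes "thermo_stable Delta"
  obtains c where "0 \<le> c"
    and "\<And>\<Lambda>. is_box \<Lambda> \<Longrightarrow> 0 < card \<Lambda> \<Longrightarrow> (\<Sum>X\<in>Pow \<Lambda>. (Delta X)\<^sup>2) \<le> c * real (card \<Lambda>)"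
proof -
  obtain cbar where cbar: "\<And>\<Lambda>. is_box \<Lambda> \<Longrightarrow> 1 / real (card \<Lambda>) * (\<Sum>X\<in>Pow \<Lambda>. (Delta X)\<^sup>2) \<le> cbar"
    using assms unfolding thermo_stable_def by blast
  show ?thesis
  proof (rule that[of "max cbar 0"])
    fix \<Lambda> :: "('a \<Rightarrow> int) set" assume "is_box \<Lambda>" and "0 < card \<Lambda>"
    then have "(\<Sum>X\<in>Pow \<Lambda>. (Delta X)\<^sup>2) \<le> cbar * real (card \<Lambda>)"
      using cbar[of \<Lambda>] by (simp add: field_simps)
    also have "\<dots> \<le> max cbar 0 * real (card \<Lambda>)"
      by (intro mult_right_mono) auto
    finally show "(\<Sum>X\<in>Pow \<Lambda>. (Delta X)\<^sup>2) \<le> max cbar 0 * real (card \<Lambda>)" .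
  qed simp
qed

text \<open>Only the bound \<open>\<bar>G\<bar> \<le> 1\<close> enters.\<close>

theorem lemma5:
  fixes Delta :: "('d::finite \<Rightarrow> int) set \<Rightarrow> real"
    and G :: "real^'r::finite^'r \<Rightarrow> real"
    and \<beta>1 \<beta>2 :: real
  assumes "translation_invariant Delta"
    and "thermo_stable Delta"
    and "smooth G"
    and "\<forall>M. \<bar>G M\<bar> \<le> 1"
    and "0 < \<beta>1" and "\<beta>1 < \<beta>2"
  shows "\<forall>\<epsilon>>0. \<exists>N. \<forall>\<Lambda>. is_box \<Lambda> \<and> card \<Lambda> \<ge> N \<longrightarrow>
           \<bar>integral {\<beta>1..\<beta>2} (Delta2 \<Lambda> Delta G)\<bar> < \<epsilon>"
proof -
  obtain c where "0 \<le> c"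
    and stable: "\<And>\<Lambda>. is_box \<Lambda> \<Longrightarrow> 0 < card \<Lambda> \<Longrightarrow> (\<Sum>X\<in>Pow \<Lambda>. (Delta X)\<^sup>2) \<le> c * real (card \<Lambda>)"
    using thermo_stable_sum_le[OF assms(2)] by blast
  define R where "R = real CARD('r)"
  show ?thesis
  proof (rule small_of_tradeoff_bound[where f = "\<lambda>\<Lambda>. integral {\<beta>1..\<beta>2} (Delta2 \<Lambda> Delta G)"
        and n = card and \<delta>\<^sub>0 = "min (\<beta>1 / 2) 1" and A = "(\<beta>2 - \<beta>1) * 4 * \<beta>2 * R * sqrt c"
        and B = "2 * (1 + 2 / \<beta>1) * R + (\<beta>2 + 2)\<^sup>2 * R\<^sup>2 * c"])
    fix \<Lambda> :: "('d \<Rightarrow> int) set" and \<delta> :: real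
    assume "is_box \<Lambda>" and "0 < card \<Lambda>" and "0 < \<delta>" and "\<delta> \<le> min (\<beta>1 / 2) 1"
    then interpret spin_glass_volume \<Lambda> Delta "TYPE('r)"
      by unfold_locales (auto simp: card_gt_0_iff)
    show "\<bar>integral {\<beta>1..\<beta>2} (Delta2 \<Lambda> Delta G)\<bar>
        \<le> (\<beta>2 - \<beta>1) * 4 * \<beta>2 * R * sqrt c / (\<delta> * sqrt (card \<Lambda>))
          + (2 * (1 + 2 / \<beta>1) * R + (\<beta>2 + 2)\<^sup>2 * R\<^sup>2 * c) * \<delta>"
      unfolding R_def using assms(4,6) \<open>0 < \<delta>\<close> \<open>\<delta> \<le> min (\<beta>1 / 2) 1\<close> \<open>0 \<le> c\<close>
        stable[OF \<open>is_box \<Lambda>\<close> \<open>0 < card \<Lambda>\<close>]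
      by (intro abs_integral_Delta2_le_stable) auto
  qed (use assms(5,6) \<open>0 \<le> c\<close> in \<open>auto simp: R_def\<close>)
qed

end
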